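(* Assume $r_n\to\infty$, that condition $[A_1]$ holds, that $G$ is differentiable on $F^{-1}(U)$ with $g=G'$, and that for every $C>0$ $$\text{(i)}\quad \Psi_{p_n,\frac gf}(C)=O\Big(\Big(\frac{\log r_n}{r_n}\Big)^{1/4}\frac{|g|}{f}(\xi_{p_n})\Big),\qquad n\to\infty.$$ Let $$R_n(p_n)=G(\xi_{p_n n:n})-G(\xi_{p_n})+[F_n(\xi_{p_n})-F(\xi_{p_n})]\frac gf(\xi_{p_n}).$$ Then for each $c>0$ there is a constant $A>0$ not depending on $n$ such that $\mathbf P(|R_n(p_n)|>\Delta_n)=O(r_n^{-c})$, where $$\Delta_n=A(p_n(1-p_n))^{1/4}\Big(\frac{\log r_n}{n}\Big)^{3/4}\frac{|g|}{f}(\xi_{p_n}).$$ If moreover $[A_2]$ holds and, for every $C>0$, $$\text{(ii)}\quad \widehat\Psi_{p_n,\frac gf}(C)=O\Big(\Big(\frac{\log n}{r_n}\Big)^{1/4}\frac{|g|}{f}(\xi_{p_n})\Big),$$ then for each $c>0$ there is such an $A$ with $\mathbf P(|R_n(p_n)|>\widehat\Delta_n)=O(n^{-c})$, where $$\widehat\Delta_n=A(p_n(1-p_n))^{1/4}\Big(\frac{\log n}{n}\Big)^{3/4}\frac{|g|}{f}(\xi_{p_n}).$$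
   Context: Let $X_1,X_2,\dots$ be i.i.d. real random variables with distribution function $F$, and let $F^{-1}(u)=\inf\{x:F(x)\ge u\}$. Let $F_n$ be the empirical distribution function and $F_n^{-1}$ its left-continuous inverse. Let $k_n$ be integers with $0\le k_n\le n$, and put $p_n=k_n/n$, $r_n=k_n\wedge(n-k_n)$, $\xi_{p_n}=F^{-1}(p_n)$, $\xi_{p_n n:n}=F_n^{-1}(p_n)$ (the $k_n$-th order statistic), $a_1=\liminf p_n$ and $a_2=\limsup p_n$. Condition $[A_1]$: there is an open $U\subset(0,1)$ on which $F^{-1}$ is differentiable, i.e. $f=F'$ exists and is positive on $F^{-1}(U)$. Moreover, for some $0<\varepsilon\le1$, $U$ contains: - $(0,\varepsilon)$ if $a_1=a_2=0$; - $(1-\varepsilon,1)$ if $a_1=a_2=1$; - $(0,a_2]$ if $0=a_1<a_2<1$; - $[a_1,1)$ if $0<a_1<a_2=1$; - $[a_1,a_2]$ if $0<a_1\le a_2<1$; - $(0,1)$ if $a_1=0$, $a_2=1$. Condition $[A_2]$: $r_n^{-1}\log n\to0$. For $h$ on $F^{-1}(U)$ and $C>0$: $$\Psi_{p_n,h}(C)=\sup_{|t|\le C}\big|h(F^{-1}(p_n+t\sqrt{r_n\log r_n/n^2}))-h(F^{-1}(p_n))\big|,$$ and $\widehat\Psi_{p_n,h}(C)$ is the same expression with $\log r_n$ replaced by $\log n$. $(g/f)(x)=g(x)/f(x)$ and $(|g|/f)(x)=|g(x)|/f(x)$. *)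

theory Defs
  imports "HOL-Probability.Probability" "HOL-Library.Landau_Symbols"
begin

definition quantile :: "(real \<Rightarrow> real) \<Rightarrow> real \<Rightarrow> real" where
  "quantile F u = Inf {x. u \<le> F x}"

text \<open>Empirical distribution function of the first n observations X 0, ..., X (n-1)
  (these play the role of X_1, ..., X_n).\<close>
definition emp_df :: "(nat \<Rightarrow> 'a \<Rightarrow> real) \<Rightarrow> nat \<Rightarrow> 'a \<Rightarrow> real \<Rightarrow> real" where
  "emp_df X n \<omega> x = real (card {i \<in> {..<n}. X i \<omega> \<le> x}) / real n"

text \<open>Modulus Psi_{p,h}(C) = sup_{|t| \<le> C} |h(F^{-1}(p + t s)) - h(F^{-1}(p))|,
  with step s; taken in the extended reals so that an unbounded sup is +\<infinity>.\<close>
definition Psi :: "(real \<Rightarrow> real) \<Rightarrow> (real \<Rightarrow> real) \<Rightarrow> real \<Rightarrow> real \<Rightarrow> real \<Rightarrow> ereal" where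
  "Psi F h p s C = (SUP t \<in> {-C..C}. ereal \<bar>h (quantile F (p + t * s)) - h (quantile F p)\<bar>)"

definition cond_A1 :: "(real \<Rightarrow> real) \<Rightarrow> (real \<Rightarrow> real) \<Rightarrow> real set \<Rightarrow> (nat \<Rightarrow> real) \<Rightarrow> bool" where
  "cond_A1 F f U p \<longleftrightarrow>
     open U \<and> U \<subseteq> {0<..<1} \<and>
     (\<forall>x \<in> quantile F ` U. (F has_real_derivative f x) (at x) \<and> f x > 0) \<and>
     (let a1 = liminf (\<lambda>n. ereal (p n)); a2 = limsup (\<lambda>n. ereal (p n)) in
      \<exists>\<epsilon>::real. 0 < \<epsilon> \<and> \<epsilon> \<le> 1 \<and>
        (a1 = 0 \<and> a2 = 0 \<longrightarrow> {0<..<\<epsilon>} \<subseteq> U) \<and>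
        (a1 = 1 \<and> a2 = 1 \<longrightarrow> {1-\<epsilon><..<1} \<subseteq> U) \<and>
        (a1 = 0 \<and> 0 < a2 \<and> a2 < 1 \<longrightarrow> {0<..real_of_ereal a2} \<subseteq> U) \<and>
        (0 < a1 \<and> a1 < a2 \<and> a2 = 1 \<longrightarrow> {real_of_ereal a1..<1} \<subseteq> U) \<and>
        (0 < a1 \<and> a1 \<le> a2 \<and> a2 < 1 \<longrightarrow> {real_of_ereal a1..real_of_ereal a2} \<subseteq> U) \<and>
        (a1 = 0 \<and> a2 = 1 \<longrightarrow> {0<..<1} \<subseteq> U))"

end

theory Submission
  imports Defs
begin

(* Around p = k/n take the 2m+1 quantile points F^-1(p + j delta), |j| <= m, with
   delta = (L/r)^(3/4) r/n and m ~ (r/L)^(1/4), where L = log rho and rho = r or rho = n.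
   A Chernoff bound for binomial counts and a union bound over the grid show that, outside an
   event of probability O(rho^-c), the empirical count at F^-1(p) is within (L/r)^(1/2) r of k and
   every grid cell holds its expected count up to (L/r)^(3/4) r. On the complement the k-th order
   statistic xi is trapped between two neighbouring grid points, which gives
   n (F xi - p) = k - n F_n(F^-1 p) + O((L/r)^(3/4) r) and |F xi - p| = O((L/r)^(1/2) r/n).
   By the Cauchy mean value theorem G xi - G(F^-1 p) = (F xi - p) (g/f)(F^-1 w) for some w between
   p and F xi, so the remainder splits into (g/f)(F^-1 p) times the first error and
   (F xi - p) times the oscillation of g/f, which condition (i) resp. (ii) controls. *)

section \<open>Chernoff bounds for binomial counts\<close>

lemma exp_le_quadratic:
  fixes x :: real assumes "\<bar>x\<bar> \<le> 1" shows "exp x \<le> 1 + x + x\<^sup>2"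
proof (cases "x \<ge> 0")
  case True then show ?thesis using exp_bound[of x] assms by auto
next
  case False
  define y where "y = -x"
  have y: "0 \<le> y" "y \<le> 1" using False assms by (auto simp: y_def)
  have "1 \<le> (1+y)*(1-y+y\<^sup>2)" using y by (simp add: algebra_simps power2_eq_square power3_eq_cube)
  also have "\<dots> \<le> exp y * (1-y+y\<^sup>2)"
  proof (rule mult_right_mono)
    show "1 + y \<le> exp y" using exp_ge_add_one_self[of y] by simp
    have "y * y \<le> y" using y by (simp add: mult_left_le_one_le)
    then show "0 \<le> 1 - y + y\<^sup>2" using y by (simp add: power2_eq_square)
  qed
  finally have "exp (-y) * 1 \<le> exp (-y) * (exp y * (1-y+y\<^sup>2))" by simp
  also have "\<dots> = 1-y+y\<^sup>2" by (simp add: exp_minus field_simps)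
  finally show ?thesis by (simp add: y_def)
qed

lemma chernoff_exponent_le:
  fixes a t :: real assumes a: "0 \<le> a" and t: "0 < t"
  shows "a * (t/(2*a+t))\<^sup>2 - (t/(2*a+t)) * t \<le> -(t\<^sup>2/(4*a+2*t))"
proof -
  define D where "D = 2*a+t"
  have D: "D > 0" using a t by (simp add: D_def)
  have "a * (t/D)\<^sup>2 - (t/D) * t = t\<^sup>2 * (a - D) / D\<^sup>2"
    using D by (simp add: field_simps power2_eq_square)
  also have "\<dots> \<le> t\<^sup>2 * (- D/2) / D\<^sup>2"
    using D a t by (intro divide_right_mono mult_left_mono) (auto simp: D_def)
  also have "\<dots> = -(t\<^sup>2/(2*D))" using D by (simp add: field_simps power2_eq_square)
  finally show ?thesis by (simp add: D_def algebra_simps)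
qed

context prob_space begin

lemma indicator_sum_mgf:
  fixes X :: "nat \<Rightarrow> 'a \<Rightarrow> real"
  assumes indep: "indep_vars (\<lambda>_. borel) X UNIV" and B: "B \<in> sets borel"
    and q: "\<And>i. prob {\<omega>\<in>space M. X i \<omega> \<in> B} = q" and l: "\<bar>l\<bar> \<le> 1"
  shows "integrable M (\<lambda>\<omega>. exp (l * (\<Sum>i<n. indicator B (X i \<omega>))))"
    and "expectation (\<lambda>\<omega>. exp (l * (\<Sum>i<n. indicator B (X i \<omega>)))) \<le> exp (n*q*(l + l\<^sup>2))"
proof -
  have rv: "\<And>i. random_variable borel (X i)" using indep unfolding indep_vars_def by auto
  define Y where "Y i \<omega> = exp (l * indicator B (X i \<omega>))" for i \<omega>
  have indep_Y: "indep_vars (\<lambda>_. borel) Y {..<n}"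
    unfolding Y_def
    by (rule indep_vars_subset[OF indep_vars_compose2[OF indep]]) (use B in measurable)
  have eq: "(\<lambda>\<omega>. exp (l * (\<Sum>i<n. indicator B (X i \<omega>)))) = (\<lambda>\<omega>. \<Prod>i\<in>{..<n}. Y i \<omega>)"
    by (rule ext) (simp only: Y_def sum_distrib_left exp_sum[OF finite_lessThan])
  have int_Y: "integrable M (Y i)" for i
  proof (rule integrable_const_bound[where B="exp \<bar>l\<bar>"])
    show "AE x in M. norm (Y i x) \<le> exp \<bar>l\<bar>" by (auto simp: Y_def indicator_def)
    show "Y i \<in> borel_measurable M" unfolding Y_def using rv[of i] B by measurable
  qed
  show "integrable M (\<lambda>\<omega>. exp (l * (\<Sum>i<n. indicator B (X i \<omega>))))"
    unfolding eq by (rule indep_vars_integrable[OF _ indep_Y]) (auto intro: int_Y)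
  have E_Y: "expectation (Y i) = 1 + (exp l - 1) * q" for i
  proof -
    define A where "A = {\<omega>\<in>space M. X i \<omega> \<in> B}"
    have A: "A \<in> events" using B rv[of i] unfolding A_def by measurable
    have "expectation (Y i) = expectation (\<lambda>\<omega>. 1 + (exp l - 1) * indicator A \<omega>)"
      by (rule Bochner_Integration.integral_cong) (auto simp: Y_def A_def indicator_def)
    also have "\<dots> = expectation (\<lambda>_. 1) + expectation (\<lambda>\<omega>. (exp l - 1) * indicator A \<omega>)"
      by (rule Bochner_Integration.integral_add)
         (use A in \<open>auto intro!: integrable_real_indicator simp: emeasure_eq_measure\<close>)
    also have "\<dots> = 1 + (exp l - 1) * q"
      using A q[of i] by (simp add: A_def prob_space Int_absorb2)
    finally show ?thesis .
  qed
  have q01: "0 \<le> q" "q \<le> 1" using q[of 0] by auto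
  have "expectation (\<lambda>\<omega>. exp (l * (\<Sum>i<n. indicator B (X i \<omega>)))) = (1 + (exp l - 1) * q) ^ n"
    unfolding eq by (subst indep_vars_lebesgue_integral[OF _ indep_Y]) (auto intro: int_Y simp: E_Y)
  also have "\<dots> \<le> exp ((exp l - 1) * q) ^ n"
  proof (rule power_mono)
    have "(1 - exp l) * q \<le> 1 * 1" using q01 by (intro mult_mono) auto
    then show "0 \<le> 1 + (exp l - 1) * q" by (simp add: algebra_simps)
  qed (rule exp_ge_add_one_self)
  also have "\<dots> = exp (n * ((exp l - 1) * q))" by (simp add: exp_of_nat_mult)
  also have "\<dots> \<le> exp (n*q*(l + l\<^sup>2))"
  proof -
    have "(exp l - 1) * (q * n) \<le> (l + l\<^sup>2) * (q * n)"
      using exp_le_quadratic[OF l] q01 by (intro mult_right_mono) auto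
    then show ?thesis by (simp add: algebra_simps)
  qed
  finally show "expectation (\<lambda>\<omega>. exp (l * (\<Sum>i<n. indicator B (X i \<omega>)))) \<le> exp (n*q*(l + l\<^sup>2))" .
qed

lemma indicator_sum_deviation:
  fixes X :: "nat \<Rightarrow> 'a \<Rightarrow> real"
  assumes indep: "indep_vars (\<lambda>_. borel) X UNIV" and B: "B \<in> sets borel"
    and q: "\<And>i. prob {\<omega>\<in>space M. X i \<omega> \<in> B} = q" and t: "0 < t" and V: "n * q \<le> V"
  shows "prob {\<omega>\<in>space M. t \<le> \<bar>(\<Sum>i<n. indicator B (X i \<omega>)) - n * q\<bar>} \<le> 2 * exp (-(t\<^sup>2/(4*V+2*t)))"
proof -
  have rv[measurable]: "\<And>i. random_variable borel (X i)" using indep unfolding indep_vars_def by auto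
  define S where "S \<omega> = (\<Sum>i<n. indicator B (X i \<omega>) :: real)" for \<omega>
  have S[measurable]: "S \<in> borel_measurable M" unfolding S_def using B by measurable
  have q0: "0 \<le> q" using q[of 0] by auto
  define a where "a = n*q"
  have a: "0 \<le> a" using q0 by (simp add: a_def)
  define l where "l = t/(2*a+t)"
  have l: "0 < l" "l \<le> 1" using a t by (auto simp: l_def)
  have exponent: "a * l\<^sup>2 - l * t \<le> -(t\<^sup>2/(4*V+2*t))"
  proof -
    have "t\<^sup>2/(4*V+2*t) \<le> t\<^sup>2/(4*a+2*t)"
      by (rule frac_le) (use a t V in \<open>auto simp: a_def\<close>)
    then show ?thesis using chernoff_exponent_le[OF a t] by (simp add: l_def)
  qed
  have markov: "prob {\<omega>\<in>space M. s \<le> m * S \<omega>} \<le> exp (n*q*(m + m\<^sup>2) - s)" if m: "\<bar>m\<bar> \<le> 1" for m s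
  proof -
    have "prob {\<omega>\<in>space M. s \<le> m * S \<omega>} = prob {\<omega>\<in>space M. exp s \<le> exp (m * S \<omega>)}"
      by simp
    also have "\<dots> \<le> expectation (\<lambda>\<omega>. exp (m * S \<omega>)) / exp s"
      by (rule integral_Markov_inequality_measure[where A="space M"])
         (use indicator_sum_mgf(1)[OF indep B q m, of n] in \<open>auto simp: S_def\<close>)
    also have "\<dots> \<le> exp (n*q*(m + m\<^sup>2)) / exp s"
      by (rule divide_right_mono) (use indicator_sum_mgf(2)[OF indep B q m, of n] in \<open>auto simp: S_def\<close>)
    also have "\<dots> = exp (n*q*(m + m\<^sup>2) - s)" by (simp add: exp_diff)
    finally show ?thesis .
  qed
  have upper: "prob {\<omega>\<in>space M. l*(n*q + t) \<le> l * S \<omega>} \<le> exp (-(t\<^sup>2/(4*V+2*t)))"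
  proof -
    have "prob {\<omega>\<in>space M. l*(n*q + t) \<le> l * S \<omega>} \<le> exp (n*q*(l + l\<^sup>2) - l*(n*q+t))"
      by (rule markov) (use l in auto)
    also have "\<dots> \<le> exp (-(t\<^sup>2/(4*V+2*t)))" using exponent by (simp add: a_def algebra_simps)
    finally show ?thesis .
  qed
  have lower: "prob {\<omega>\<in>space M. (-l)*(n*q - t) \<le> (-l) * S \<omega>} \<le> exp (-(t\<^sup>2/(4*V+2*t)))"
  proof -
    have "prob {\<omega>\<in>space M. (-l)*(n*q - t) \<le> (-l) * S \<omega>} \<le> exp (n*q*((-l) + (-l)\<^sup>2) - (-l)*(n*q-t))"
      by (rule markov) (use l in auto)
    also have "\<dots> \<le> exp (-(t\<^sup>2/(4*V+2*t)))" using exponent by (simp add: a_def algebra_simps)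
    finally show ?thesis .
  qed
  have "{\<omega>\<in>space M. t \<le> \<bar>S \<omega> - n * q\<bar>}
      = {\<omega>\<in>space M. l*(n*q + t) \<le> l * S \<omega>} \<union> {\<omega>\<in>space M. (-l)*(n*q - t) \<le> (-l) * S \<omega>}"
    using l by (auto simp: abs_le_iff)
  then have "prob {\<omega>\<in>space M. t \<le> \<bar>S \<omega> - n * q\<bar>}
      \<le> prob {\<omega>\<in>space M. l*(n*q + t) \<le> l * S \<omega>} + prob {\<omega>\<in>space M. (-l)*(n*q - t) \<le> (-l) * S \<omega>}"
    by (simp add: measure_Un_le)
  then show ?thesis using upper lower by (simp add: S_def)
qed

end

section \<open>Quantiles and order statistics\<close>

lemma quantile_regular_point:
  fixes F :: "real \<Rightarrow> real"
  assumes mono: "mono F" and lo: "\<exists>x. F x < u" and hi: "\<exists>x. u \<le> F x"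
    and der: "DERIV F (quantile F u) :> d" and d: "d > 0"
  shows "\<And>x. x < quantile F u \<Longrightarrow> F x < u"
    and "F (quantile F u) = u"
    and "\<And>x. x > quantile F u \<Longrightarrow> F x > u"
proof -
  define S where "S = {x. u \<le> F x}"
  define z where "z = quantile F u"
  have zS: "z = Inf S" by (simp add: z_def S_def quantile_def)
  have ne: "S \<noteq> {}" using hi by (auto simp: S_def)
  obtain x0 where x0: "F x0 < u" using lo by auto
  have bdd: "bdd_below S"
  proof (rule bdd_belowI)
    fix y assume "y \<in> S"
    then have "\<not> y \<le> x0" using x0 monoD[OF mono, of y x0] by (auto simp: S_def)
    then show "x0 \<le> y" by simp
  qed
  show below: "F x < u" if "x < quantile F u" for x
  proof (rule ccontr)
    assume "\<not> F x < u"
    then have "x \<in> S" by (auto simp: S_def)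
    then have "z \<le> x" unfolding zS by (rule cInf_lower[OF _ bdd])
    then show False using that by (simp add: z_def)
  qed
  have cont: "isCont F z" using der DERIV_isCont by (simp add: z_def)
  then have eps: "\<forall>r>0. \<exists>s>0. \<forall>x. x \<noteq> z \<and> norm (x - z) < s \<longrightarrow> norm (F x - F z) < r"
    by (simp add: isCont_def LIM_eq)
  show at_quantile: "F (quantile F u) = u"
  proof (rule ccontr)
    assume ne': "F (quantile F u) \<noteq> u"
    show False
    proof (cases "F z < u")
      case True
      obtain s where s: "s > 0" "\<forall>x. x \<noteq> z \<and> norm (x - z) < s \<longrightarrow> norm (F x - F z) < u - F z"
        using eps True by (meson diff_gt_0_iff_gt)
      obtain y where y: "y \<in> S" "y < z + s" using cInf_less_iff[OF ne bdd, of "z+s"] s zS by auto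
      have "z \<le> y" unfolding zS by (rule cInf_lower[OF y(1) bdd])
      show False
      proof (cases "y = z")
        case True then show False using y(1) \<open>F z < u\<close> by (auto simp: S_def)
      next
        case False
        then have "\<bar>F y - F z\<bar> < u - F z" using s(2) \<open>z \<le> y\<close> y(2) by auto
        then show False using y(1) by (auto simp: S_def)
      qed
    next
      case False
      then have gt: "F z > u" using ne' by (simp add: z_def)
      obtain s where s: "s > 0" "\<forall>x. x \<noteq> z \<and> norm (x - z) < s \<longrightarrow> norm (F x - F z) < F z - u"
        using eps gt by (meson diff_gt_0_iff_gt)
      have "\<bar>F (z - s/2) - F z\<bar> < F z - u" using s by auto
      moreover have "F (z - s/2) < u" using below[of "z - s/2"] s by (simp add: z_def)
      ultimately show False by auto
    qed
  qed
  show "F x > u" if "x > quantile F u" for x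
  proof -
    obtain e where e: "e > 0" "\<forall>h>0. h < e \<longrightarrow> F z < F (z + h)"
      using DERIV_pos_inc_right[OF der d] by (auto simp: z_def)
    define h where "h = min (x - z) (e/2)"
    have h: "h > 0" "h < e" "z + h \<le> x" using that e by (auto simp: h_def z_def)
    have "u < F (z + h)" using e h at_quantile by (auto simp: z_def)
    also have "\<dots> \<le> F x" using mono h(3) by (auto simp: mono_def)
    finally show ?thesis .
  qed
qed

lemma card_obs_le_eq_indicator_sum:
  fixes X :: "nat \<Rightarrow> 'a \<Rightarrow> real" and n :: nat
  shows   "real (card {i \<in> {..<n}. X i \<omega> \<le> x}) = (\<Sum>i<n. indicator {..x} (X i \<omega>) :: real)"
proof -
  have "real (card {i\<in>{..<n}. X i \<omega> \<le> x}) = (\<Sum>i\<in>{i\<in>{..<n}. X i \<omega> \<le> x}. 1)" by simp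
  also have "\<dots> = (\<Sum>i<n. if X i \<omega> \<le> x then 1 else 0)" by (rule sum.inter_filter) simp
  also have "\<dots> = (\<Sum>i<n. indicator {..x} (X i \<omega>))" by (rule sum.cong) (auto simp: indicator_def)
  finally show ?thesis .
qed

lemma emp_quantile_count_bounds:
  fixes X :: "nat \<Rightarrow> 'a \<Rightarrow> real"
  assumes k: "1 \<le> k" "k \<le> n"
  shows "\<And>x. x < quantile (emp_df X n \<omega>) (real k / real n) \<Longrightarrow> (\<Sum>i<n. indicator {..x} (X i \<omega>) :: real) < k"
    and "real k \<le> (\<Sum>i<n. indicator {..quantile (emp_df X n \<omega>) (real k / real n)} (X i \<omega>) :: real)"
proof -
  define Nr where "Nr x = (\<Sum>i<n. indicator {..x} (X i \<omega>) :: real)" for x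
  have n: "n > 0" using k by auto
  define S where "S = {x. real k / real n \<le> emp_df X n \<omega> x}"
  have S: "S = {x. real k \<le> Nr x}"
    using n by (auto simp: S_def emp_df_def Nr_def card_obs_le_eq_indicator_sum[symmetric] divide_le_cancel)
  have q: "quantile (emp_df X n \<omega>) (real k / real n) = Inf S" by (simp add: quantile_def S_def)
  define T where "T = (\<lambda>i. X i \<omega>) ` {..<n}"
  have T: "finite T" "T \<noteq> {}" using n by (auto simp: T_def)
  have ex: "\<exists>i<n. X i \<omega> \<le> x" if "x \<in> S" for x
  proof (rule ccontr)
    assume "\<not> ?thesis"
    then have "Nr x = 0" by (auto simp: Nr_def indicator_def)
    then show False using that k S by auto
  qed
  have bdd: "bdd_below S"
  proof (rule bdd_belowI[of _ "Min T"])
    fix x assume "x \<in> S"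
    then obtain i where "i < n" "X i \<omega> \<le> x" using ex by blast
    then have "X i \<omega> \<in> T" by (auto simp: T_def)
    then have "Min T \<le> X i \<omega>" using T by simp
    then show "Min T \<le> x" using \<open>X i \<omega> \<le> x\<close> by simp
  qed
  have NrMax: "Nr (Max T) = n"
  proof -
    have "Nr (Max T) = (\<Sum>i<n. 1)"
      unfolding Nr_def by (rule sum.cong) (use T in \<open>auto simp: T_def indicator_def\<close>)
    then show ?thesis by simp
  qed
  have MaxS: "Max T \<in> S" using NrMax k S by auto
  have SneT: "S \<inter> T \<noteq> {}" using MaxS Max_in[OF T] by blast
  define \<mu> where "\<mu> = Min (S \<inter> T)"
  have \<mu>S: "\<mu> \<in> S" using SneT T Min_in[of "S \<inter> T"] by (auto simp: \<mu>_def)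
  have low: "\<mu> \<le> x" if "x \<in> S" for x
  proof -
    define P where "P = {y\<in>T. y \<le> x}"
    have P: "finite P" "P \<noteq> {}" using ex[OF that] T by (auto simp: P_def T_def)
    define t where "t = Max P"
    have tP: "t \<in> P" using P by (simp add: t_def)
    have "Nr t = Nr x"
      unfolding Nr_def
    proof (rule sum.cong[OF refl])
      fix i assume "i \<in> {..<n}"
      then have "X i \<omega> \<in> T" by (auto simp: T_def)
      then have "X i \<omega> \<le> x \<longleftrightarrow> X i \<omega> \<le> t"
      proof (intro iffI)
        assume "X i \<omega> \<le> x" then have "X i \<omega> \<in> P" using \<open>X i \<omega> \<in> T\<close> by (simp add: P_def)
        then show "X i \<omega> \<le> t" using P by (simp add: t_def)
      next
        assume "X i \<omega> \<le> t" then show "X i \<omega> \<le> x" using tP by (simp add: P_def)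
      qed
      then show "indicator {..t} (X i \<omega>) = (indicator {..x} (X i \<omega>) :: real)"
        by (auto simp: indicator_def)
    qed
    then have "t \<in> S \<inter> T" using that tP S by (auto simp: P_def)
    then have "\<mu> \<le> t" using T by (simp add: \<mu>_def)
    also have "t \<le> x" using tP by (simp add: P_def)
    finally show ?thesis .
  qed
  have qeq: "quantile (emp_df X n \<omega>) (real k / real n) = \<mu>"
    unfolding q
  proof (rule antisym)
    show "Inf S \<le> \<mu>" by (rule cInf_lower[OF \<mu>S bdd])
    show "\<mu> \<le> Inf S" using MaxS by (intro cInf_greatest) (auto intro: low)
  qed
  show "real k \<le> (\<Sum>i<n. indicator {..quantile (emp_df X n \<omega>) (real k / real n)} (X i \<omega>) :: real)"
    using \<mu>S S qeq by (simp add: Nr_def)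
  show "(\<Sum>i<n. indicator {..x} (X i \<omega>) :: real) < k" if "x < quantile (emp_df X n \<omega>) (real k / real n)" for x
  proof (rule ccontr)
    assume "\<not> ?thesis"
    then have "x \<in> S" using S by (auto simp: Nr_def)
    then have "\<mu> \<le> x" by (rule low)
    then show False using that qeq by simp
  qed
qed

text \<open>Deterministic core: the order statistic \<open>\<xi>\<close> is trapped between consecutive grid points
  \<open>x j < \<xi> \<le> x (j+1)\<close>, because \<open>N (x j) < k \<le> N (x (j+1))\<close>, and the count bounds at these two
  points pin down \<open>F \<xi>\<close>.\<close>

lemma order_statistic_grid_bound:
  fixes F N :: "real \<Rightarrow> real" and x :: "int \<Rightarrow> real" and m :: int
    and p \<delta> k N0 b a n \<xi> :: real
  assumes monoF: "mono F" and monoN: "mono N"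
    and xF: "\<And>j. j \<in> {-m..m} \<Longrightarrow> F (x j) = p + j*\<delta>"
    and xstrict: "\<And>j y. j \<in> {-m..m} \<Longrightarrow> y > x j \<Longrightarrow> F y > F (x j)"
    and E1: "\<And>y. y < \<xi> \<Longrightarrow> N y < k"
    and E2: "k \<le> N \<xi>"
    and good: "\<And>j. j \<in> {-m..m} \<Longrightarrow> \<bar>N (x j) - N0 - n*j*\<delta>\<bar> < b"
    and good0: "\<bar>N0 - k\<bar> < a"
    and big: "a + b \<le> n*m*\<delta>"
    and d: "\<delta> > 0" and n: "n > 0" and k: "k = n*p" and m: "m \<ge> 0"
  shows "p - m*\<delta> < F \<xi>" "F \<xi> \<le> p + m*\<delta>" "\<bar>n*(F \<xi> - p) + N0 - k\<bar> < n*\<delta> + b"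
proof -
  have mm: "-m \<in> {-m..m}" "m \<in> {-m..m}" using m by auto
  show lowV: "p - m*\<delta> < F \<xi>"
  proof (rule ccontr)
    assume "\<not> ?thesis"
    then have "F \<xi> \<le> F (x (-m))" using xF[OF mm(1)] by simp
    then have "\<xi> \<le> x (-m)" using xstrict[OF mm(1), of \<xi>] by force
    then have "k \<le> N (x (-m))" using E2 monoD[OF monoN] by (meson order_trans)
    moreover have "N (x (-m)) < N0 - n*m*\<delta> + b" using good[OF mm(1)] by auto
    ultimately show False using good0 big by auto
  qed
  show upV: "F \<xi> \<le> p + m*\<delta>"
  proof (rule ccontr)
    assume "\<not> ?thesis"
    then have "F \<xi> > F (x m)" using xF[OF mm(2)] by simp
    then have "\<xi> > x m" using monoD[OF monoF, of \<xi> "x m"] by force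
    then have "N (x m) < k" using E1 by blast
    moreover have "N (x m) > N0 + n*m*\<delta> - b" using good[OF mm(2)] by auto
    ultimately show False using good0 big by auto
  qed
  define j where "j = \<lceil>(F \<xi> - p)/\<delta>\<rceil> - 1"
  have j1: "j < (F \<xi> - p)/\<delta>" "(F \<xi> - p)/\<delta> \<le> j + 1" unfolding j_def by linarith+
  have jlo: "p + j*\<delta> < F \<xi>" using j1(1) d by (simp add: field_simps)
  have jhi: "F \<xi> \<le> p + (j+1)*\<delta>" using j1(2) d by (simp add: field_simps)
  have "(F \<xi> - p)/\<delta> > -m" using lowV d by (simp add: field_simps)
  then have "j \<ge> -m" unfolding j_def by linarith
  have "(F \<xi> - p)/\<delta> \<le> m" using upV d by (simp add: field_simps)
  then have "j + 1 \<le> m" unfolding j_def by linarith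
  have jin: "j \<in> {-m..m}" "j+1 \<in> {-m..m}" using \<open>j \<ge> -m\<close> \<open>j+1 \<le> m\<close> by auto
  have "F \<xi> > F (x j)" using jlo xF[OF jin(1)] by simp
  then have "\<xi> > x j" using monoD[OF monoF, of \<xi> "x j"] by force
  then have Nj: "N (x j) < k" using E1 by blast
  have "F \<xi> \<le> F (x (j+1))" using jhi xF[OF jin(2)] by simp
  then have "\<xi> \<le> x (j+1)" using xstrict[OF jin(2), of \<xi>] by force
  then have Nj1: "k \<le> N (x (j+1))" using E2 monoD[OF monoN] by (meson order_trans)
  have g1: "\<bar>N (x j) - N0 - n*j*\<delta>\<bar> < b" using good[OF jin(1)] .
  have g2: "\<bar>N (x (j+1)) - N0 - n*(j+1)*\<delta>\<bar> < b" using good[OF jin(2)] by simp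
  have "n*(F \<xi> - p) \<le> n*((j+1)*\<delta>)" using jhi n by (intro mult_left_mono) auto
  moreover have "n*(F \<xi> - p) \<ge> n*(j*\<delta>)" using jlo n by (intro mult_left_mono) auto
  ultimately show "\<bar>n*(F \<xi> - p) + N0 - k\<bar> < n*\<delta> + b"
    using g1 g2 Nj Nj1 by (auto simp: algebra_simps abs_less_iff)
qed

lemma quantile_mean_value:
  fixes F G f g :: "real \<Rightarrow> real" and lo hi p \<xi> :: real
  assumes monoF: "mono F"
    and good: "\<And>u. u \<in> {lo..hi} \<Longrightarrow> F (quantile F u) = u \<and> (\<forall>x<quantile F u. F x < u) \<and> (\<forall>x>quantile F u. F x > u)"
    and der: "\<And>u. u \<in> {lo..hi} \<Longrightarrow> DERIV F (quantile F u) :> f (quantile F u) \<and> f (quantile F u) > 0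
                 \<and> DERIV G (quantile F u) :> g (quantile F u)"
    and p: "p \<in> {lo..hi}" and V: "F \<xi> \<in> {lo..hi}"
  shows "\<exists>w. min p (F \<xi>) \<le> w \<and> w \<le> max p (F \<xi>) \<and>
     G \<xi> - G (quantile F p) = (F \<xi> - p) * (g (quantile F w) / f (quantile F w))"
proof -
  define q where "q = quantile F"
  define a where "a = q p"
  have lohi: "lo \<in> {lo..hi}" "hi \<in> {lo..hi}" using p by auto
  have inr: "q lo \<le> y \<and> y \<le> q hi" if "F y \<in> {lo..hi}" for y
  proof
    show "q lo \<le> y"
    proof (rule ccontr)
      assume "\<not> ?thesis" then have "F y < lo" using good[OF lohi(1)] by (auto simp: q_def)
      then show False using that by auto
    qed
    show "y \<le> q hi"
    proof (rule ccontr)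
      assume "\<not> ?thesis" then have "F y > hi" using good[OF lohi(2)] by (auto simp: q_def)
      then show False using that by auto
    qed
  qed
  have Fa: "F a = p" using good[OF p] by (simp add: a_def q_def)
  have a_in: "q lo \<le> a \<and> a \<le> q hi" using inr[of a] Fa p by simp
  have xi_in: "q lo \<le> \<xi> \<and> \<xi> \<le> q hi" using inr[OF V] .
  have yfacts: "F y \<in> {lo..hi} \<and> q (F y) = y" if "q lo \<le> y" "y \<le> q hi" for y
  proof -
    have "lo \<le> F y" using monoD[OF monoF that(1)] good[OF lohi(1)] by (simp add: q_def)
    moreover have "F y \<le> hi" using monoD[OF monoF that(2)] good[OF lohi(2)] by (simp add: q_def)
    ultimately have v: "F y \<in> {lo..hi}" by simp
    have "q (F y) = y"
    proof (rule ccontr)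
      assume ne: "q (F y) \<noteq> y"
      show False
      proof (cases "q (F y) < y")
        case True then have "F y > F y" using good[OF v] by (auto simp: q_def)
        then show False by simp
      next
        case False then have "y < q (F y)" using ne by simp
        then have "F y < F y" using good[OF v] by (auto simp: q_def)
        then show False by simp
      qed
    qed
    then show ?thesis using v by simp
  qed
  have dy: "DERIV F y :> f y \<and> f y > 0 \<and> DERIV G y :> g y" if "q lo \<le> y" "y \<le> q hi" for y
    using der[of "F y"] yfacts[OF that] by (simp add: q_def)
  have cF: "isCont F z" if "q lo \<le> z" "z \<le> q hi" for z using dy[OF that] DERIV_isCont by blast
  have cG: "isCont G z" if "q lo \<le> z" "z \<le> q hi" for z using dy[OF that] DERIV_isCont by blast
  have dF: "DERIV F z :> f z" if "q lo \<le> z" "z \<le> q hi" for z using dy[OF that] by blast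
  have dG: "DERIV G z :> g z" if "q lo \<le> z" "z \<le> q hi" for z using dy[OF that] by blast
  show ?thesis
  proof (cases "\<xi> = a")
    case True
    then show ?thesis using Fa by (intro exI[of _ p]) (auto simp: a_def q_def)
  next
    case False
    show ?thesis
    proof (cases "a < \<xi>")
      case True
      have r: "\<exists>c. a < c \<and> c < \<xi> \<and> (F \<xi> - F a) * g c = (G \<xi> - G a) * f c"
        by (rule GMVT'[OF True]) (use a_in xi_in in \<open>(meson cF cG dF dG order_trans less_imp_le)+\<close>)
      then obtain c where c: "a < c" "c < \<xi>" "(F \<xi> - F a) * g c = (G \<xi> - G a) * f c" by blast
      have cin: "q lo \<le> c" "c \<le> q hi" using c a_in xi_in by auto
      have fc: "f c > 0" using dy[OF cin] by simp
      have qc: "q (F c) = c" using yfacts[OF cin] by simp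
      have "G \<xi> - G a = (F \<xi> - p) * (g c / f c)" using c(3) fc Fa by (simp add: field_simps)
      moreover have "F a \<le> F c" "F c \<le> F \<xi>" using c monoD[OF monoF] by auto
      ultimately show ?thesis using Fa qc
        by (intro exI[of _ "F c"]) (auto simp: a_def q_def)
    next
      case False
      then have lt: "\<xi> < a" using \<open>\<xi> \<noteq> a\<close> by simp
      have r: "\<exists>c. \<xi> < c \<and> c < a \<and> (F a - F \<xi>) * g c = (G a - G \<xi>) * f c"
        by (rule GMVT'[OF lt]) (use a_in xi_in in \<open>(meson cF cG dF dG order_trans less_imp_le)+\<close>)
      then obtain c where c: "\<xi> < c" "c < a" "(F a - F \<xi>) * g c = (G a - G \<xi>) * f c" by blast
      have cin: "q lo \<le> c" "c \<le> q hi" using c a_in xi_in by auto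
      have fc: "f c > 0" using dy[OF cin] by simp
      have qc: "q (F c) = c" using yfacts[OF cin] by simp
      have "G \<xi> - G a = (F \<xi> - p) * (g c / f c)" using c(3) fc Fa by (simp add: field_simps)
      moreover have "F \<xi> \<le> F c" "F c \<le> F a" using c monoD[OF monoF] by auto
      ultimately show ?thesis using Fa qc
        by (intro exI[of _ "F c"]) (auto simp: a_def q_def)
    qed
  qed
qed

section \<open>Condition A1\<close>

lemma open_real_contains_interval: "open (U::real set) \<Longrightarrow> x \<in> U \<Longrightarrow> \<exists>d>0. \<forall>u. \<bar>u - x\<bar> < d \<longrightarrow> u \<in> U"
  unfolding open_contains_ball subset_iff by (simp add: dist_real_def) (metis abs_minus_commute)

lemma cond_A1_neighbourhood:
  fixes p :: "nat \<Rightarrow> real"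
  assumes A1: "cond_A1 F f U p" and p01: "\<And>n. 0 \<le> p n \<and> p n \<le> 1"
  shows "\<exists>lo hi \<eta>. \<eta> > 0 \<and> (\<forall>u. 0 < u \<and> u < 1 \<and> lo - \<eta> \<le> u \<and> u \<le> hi + \<eta> \<longrightarrow> u \<in> U)
           \<and> eventually (\<lambda>n. lo - \<eta>/2 < p n \<and> p n < hi + \<eta>/2) sequentially"
proof -
  define a1 where "a1 = liminf (\<lambda>n. ereal (p n))"
  define a2 where "a2 = limsup (\<lambda>n. ereal (p n))"
  have opU: "open U" using A1 by (simp add: cond_A1_def)
  have a1ge: "0 \<le> a1" unfolding a1_def by (rule Liminf_bounded) (use p01 in auto)
  have a2le: "a2 \<le> 1" unfolding a2_def by (rule Limsup_bounded) (use p01 in auto)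
  have a12: "a1 \<le> a2" unfolding a1_def a2_def by (rule Liminf_le_Limsup) simp
  obtain A1r where A1r: "a1 = ereal A1r" using a1ge a12 a2le by (cases a1) auto
  obtain A2r where A2r: "a2 = ereal A2r" using a1ge a12 a2le by (cases a2) auto
  have r: "0 \<le> A1r" "A1r \<le> A2r" "A2r \<le> 1" using a1ge a12 a2le A1r A2r by auto
  have "\<exists>\<epsilon>::real. 0 < \<epsilon> \<and> \<epsilon> \<le> 1 \<and>
        (a1 = 0 \<and> a2 = 0 \<longrightarrow> {0<..<\<epsilon>} \<subseteq> U) \<and>
        (a1 = 1 \<and> a2 = 1 \<longrightarrow> {1-\<epsilon><..<1} \<subseteq> U) \<and>
        (a1 = 0 \<and> 0 < a2 \<and> a2 < 1 \<longrightarrow> {0<..real_of_ereal a2} \<subseteq> U) \<and>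
        (0 < a1 \<and> a1 < a2 \<and> a2 = 1 \<longrightarrow> {real_of_ereal a1..<1} \<subseteq> U) \<and>
        (0 < a1 \<and> a1 \<le> a2 \<and> a2 < 1 \<longrightarrow> {real_of_ereal a1..real_of_ereal a2} \<subseteq> U) \<and>
        (a1 = 0 \<and> a2 = 1 \<longrightarrow> {0<..<1} \<subseteq> U)"
    (is "\<exists>\<epsilon>. ?A1 \<epsilon>")
    using A1 unfolding cond_A1_def Let_def a1_def a2_def by (elim conjE)
  then obtain \<epsilon> :: real where e0: "?A1 \<epsilon>" ..
  have e: "0 < \<epsilon>" "\<epsilon> \<le> 1" using e0 by auto
  have c1: "A1r = 0 \<and> A2r = 0 \<longrightarrow> {0<..<\<epsilon>} \<subseteq> U" using e0 unfolding A1r A2r by (simp add: zero_ereal_def one_ereal_def)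
  have c2: "A1r = 1 \<and> A2r = 1 \<longrightarrow> {1-\<epsilon><..<1} \<subseteq> U" using e0 unfolding A1r A2r by (simp add: zero_ereal_def one_ereal_def)
  have c3: "A1r = 0 \<and> 0 < A2r \<and> A2r < 1 \<longrightarrow> {0<..A2r} \<subseteq> U" using e0 unfolding A1r A2r by (simp add: zero_ereal_def one_ereal_def)
  have c4: "0 < A1r \<and> A1r < A2r \<and> A2r = 1 \<longrightarrow> {A1r..<1} \<subseteq> U" using e0 unfolding A1r A2r by (simp add: zero_ereal_def one_ereal_def)
  have c5: "0 < A1r \<and> A1r \<le> A2r \<and> A2r < 1 \<longrightarrow> {A1r..A2r} \<subseteq> U" using e0 unfolding A1r A2r by (simp add: zero_ereal_def one_ereal_def)
  have c6: "A1r = 0 \<and> A2r = 1 \<longrightarrow> {0<..<1} \<subseteq> U" using e0 unfolding A1r A2r by (simp add: zero_ereal_def one_ereal_def)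
  have ev_lo: "eventually (\<lambda>n. y < p n) sequentially" if "y < A1r" for y
    using less_LiminfD[of "ereal y" sequentially "\<lambda>n. ereal (p n)"] that A1r a1_def by auto
  have ev_hi: "eventually (\<lambda>n. p n < y) sequentially" if "A2r < y" for y
    using Limsup_lessD[where y="ereal y" and F=sequentially and f="\<lambda>n. ereal (p n)"] that A2r a2_def by auto
  have from_interval: "\<exists>lo hi \<eta>. \<eta> > 0 \<and> (\<forall>u. 0 < u \<and> u < 1 \<and> lo - \<eta> \<le> u \<and> u \<le> hi + \<eta> \<longrightarrow> u \<in> U)
           \<and> eventually (\<lambda>n. lo - \<eta>/2 < p n \<and> p n < hi + \<eta>/2) sequentially"
    if "\<eta> > 0" "\<forall>u. 0 < u \<and> u < 1 \<and> lo - \<eta> \<le> u \<and> u \<le> hi + \<eta> \<longrightarrow> u \<in> U"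
       "lo - \<eta>/2 < A1r" "A2r < hi + \<eta>/2" for lo hi \<eta>
    using that ev_lo[OF that(3)] ev_hi[OF that(4)] by (intro exI[of _ lo] exI[of _ hi] exI[of _ \<eta>]) (auto intro: eventually_conj)
  consider "A2r = 0" | "A1r = 1" | "A1r = 0 \<and> 0 < A2r \<and> A2r < 1" | "0 < A1r \<and> A1r < 1 \<and> A2r = 1"
    | "0 < A1r \<and> A2r < 1" | "A1r = 0 \<and> A2r = 1" using r by linarith
  then show ?thesis
  proof cases
    case 1
    then have "A1r = 0" using r by simp
    then show ?thesis using c1 1 e by (intro from_interval[of "\<epsilon>/4" 0 "\<epsilon>/2"]) auto
  next
    case 2
    then have "A2r = 1" using r by simp
    then show ?thesis using c2 2 e by (intro from_interval[of "\<epsilon>/4" "1 - \<epsilon>/2" 1]) auto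
  next
    case 3
    have "A2r \<in> U" using c3 3 by auto
    then obtain d where d: "d > 0" "\<forall>u. \<bar>u - A2r\<bar> < d \<longrightarrow> u \<in> U" using open_real_contains_interval[OF opU] by blast
    show ?thesis
    proof (rule from_interval[of "d/2" 0 A2r])
      show "\<forall>u. 0 < u \<and> u < 1 \<and> 0 - d/2 \<le> u \<and> u \<le> A2r + d/2 \<longrightarrow> u \<in> U"
      proof (intro allI impI)
        fix u assume u: "0 < u \<and> u < 1 \<and> 0 - d/2 \<le> u \<and> u \<le> A2r + d/2"
        show "u \<in> U"
        proof (cases "u \<le> A2r")
          case True then show ?thesis using c3 3 u by auto
        next
          case False then show ?thesis using d u by auto
        qed
      qed
    qed (use d 3 in auto)
  next
    case 4
    have "A1r \<in> U" using c4 4 by auto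
    then obtain d where d: "d > 0" "\<forall>u. \<bar>u - A1r\<bar> < d \<longrightarrow> u \<in> U" using open_real_contains_interval[OF opU] by blast
    show ?thesis
    proof (rule from_interval[of "d/2" A1r 1])
      show "\<forall>u. 0 < u \<and> u < 1 \<and> A1r - d/2 \<le> u \<and> u \<le> 1 + d/2 \<longrightarrow> u \<in> U"
      proof (intro allI impI)
        fix u assume u: "0 < u \<and> u < 1 \<and> A1r - d/2 \<le> u \<and> u \<le> 1 + d/2"
        show "u \<in> U"
        proof (cases "A1r \<le> u")
          case True then show ?thesis using c4 4 u by auto
        next
          case False then show ?thesis using d u by auto
        qed
      qed
    qed (use d 4 in auto)
  next
    case 5
    have "A1r \<in> U" "A2r \<in> U" using c5 5 r by auto
    then obtain d1 d2 where d1: "d1 > 0" "\<forall>u. \<bar>u - A1r\<bar> < d1 \<longrightarrow> u \<in> U"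
      and d2: "d2 > 0" "\<forall>u. \<bar>u - A2r\<bar> < d2 \<longrightarrow> u \<in> U" using open_real_contains_interval[OF opU] by meson
    define d where "d = min d1 d2"
    show ?thesis
    proof (rule from_interval[of "d/2" A1r A2r])
      show "\<forall>u. 0 < u \<and> u < 1 \<and> A1r - d/2 \<le> u \<and> u \<le> A2r + d/2 \<longrightarrow> u \<in> U"
      proof (intro allI impI)
        fix u assume u: "0 < u \<and> u < 1 \<and> A1r - d/2 \<le> u \<and> u \<le> A2r + d/2"
        show "u \<in> U"
        proof (cases "A1r \<le> u")
          case True
          show ?thesis
          proof (cases "u \<le> A2r")
            case True then show ?thesis using c5 5 r \<open>A1r \<le> u\<close> by auto
          next
            case False then show ?thesis using d2 u d1 by (auto simp: d_def)
          qed
        next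
          case False then show ?thesis using d1 u d2 by (auto simp: d_def)
        qed
      qed
    qed (use d1 d2 in \<open>auto simp: d_def\<close>)
  next
    case 6
    then show ?thesis using c6 by (intro from_interval[of 1 0 1]) auto
  qed
qed

section \<open>The sampling model\<close>

locale iid_sample = prob_space M for M :: "'a measure" +
  fixes X :: "nat \<Rightarrow> 'a \<Rightarrow> real" and F f G g :: "real \<Rightarrow> real" and U :: "real set" and k :: "nat \<Rightarrow> nat"
  assumes indep: "indep_vars (\<lambda>_. borel) X UNIV"
    and df: "\<And>i x. measure M {\<omega> \<in> space M. X i \<omega> \<le> x} = F x"
    and k_le: "\<And>n. k n \<le> n"
    and A1: "cond_A1 F f U (\<lambda>n. real (k n) / real n)"
    and G_deriv: "\<forall>x \<in> quantile F ` U. (G has_real_derivative g x) (at x)"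
begin

lemma measurable_X[measurable]: "X i \<in> borel_measurable M"
  using indep unfolding indep_vars_def by auto

lemma mono_F: "mono F"
proof (rule monoI)
  fix x y :: real assume "x \<le> y"
  then have "measure M {\<omega> \<in> space M. X 0 \<omega> \<le> x} \<le> measure M {\<omega> \<in> space M. X 0 \<omega> \<le> y}"
    by (intro finite_measure_mono) auto
  then show "F x \<le> F y" using df by simp
qed

lemma F_below: "u > 0 \<Longrightarrow> \<exists>x. F x < u"
proof -
  assume u: "u > 0"
  define A where "A n = {\<omega> \<in> space M. X 0 \<omega> \<le> - real n}" for n
  have "(\<lambda>n. measure M (A n)) \<longlonglongrightarrow> measure M (\<Inter>n. A n)"
    by (rule finite_Lim_measure_decseq) (auto simp: A_def decseq_def)
  moreover have "(\<Inter>n. A n) = {}"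
  proof -
    have "\<omega> \<notin> A (nat \<lceil>- X 0 \<omega>\<rceil> + 1)" for \<omega> by (auto simp: A_def) linarith
    then show ?thesis by blast
  qed
  ultimately have "(\<lambda>n. measure M (A n)) \<longlonglongrightarrow> 0" by simp
  from LIMSEQ_D[OF this u] obtain n where "norm (measure M (A n) - 0) < u" by blast
  then have "measure M (A n) < u" by simp
  then show ?thesis using df by (auto simp: A_def)
qed

lemma F_above: "u < 1 \<Longrightarrow> \<exists>x. u \<le> F x"
proof -
  assume u: "u < 1"
  define A where "A n = {\<omega> \<in> space M. X 0 \<omega> \<le> real n}" for n
  have "(\<lambda>n. measure M (A n)) \<longlonglongrightarrow> measure M (\<Union>n. A n)"
    by (rule finite_Lim_measure_incseq) (auto simp: A_def incseq_def)
  moreover have "(\<Union>n. A n) = space M"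
  proof -
    have "\<omega> \<in> A (nat \<lceil>X 0 \<omega>\<rceil>)" if "\<omega> \<in> space M" for \<omega> using that by (auto simp: A_def) linarith
    then show ?thesis by (auto simp: A_def)
  qed
  ultimately have "(\<lambda>n. measure M (A n)) \<longlonglongrightarrow> 1" by (simp add: prob_space)
  from LIMSEQ_D[OF this, of "1 - u"] u obtain n where "norm (measure M (A n) - 1) < 1 - u" by auto
  then have "measure M (A n) > u" by simp
  then show ?thesis using df by (auto simp: A_def intro: less_imp_le)
qed

lemma U_subset: "U \<subseteq> {0<..<1}" using A1 by (simp add: cond_A1_def)

lemma F_deriv_quantile: "u \<in> U \<Longrightarrow> DERIV F (quantile F u) :> f (quantile F u) \<and> f (quantile F u) > 0"
  using A1 by (auto simp: cond_A1_def)

lemma G_deriv_quantile: "u \<in> U \<Longrightarrow> DERIV G (quantile F u) :> g (quantile F u)"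
  using G_deriv by auto

lemma quantile_regular: assumes "u \<in> U"
  shows "F (quantile F u) = u \<and> (\<forall>x<quantile F u. F x < u) \<and> (\<forall>x>quantile F u. F x > u)"
proof -
  have u: "0 < u" "u < 1" using U_subset assms by auto
  have d: "DERIV F (quantile F u) :> f (quantile F u)" "f (quantile F u) > 0" using F_deriv_quantile[OF assms] by auto
  show ?thesis using quantile_regular_point[OF mono_F F_below[OF u(1)] F_above[OF u(2)] d] by blast
qed

lemma F_quantile: "u \<in> U \<Longrightarrow> F (quantile F u) = u"
  using quantile_regular by blast

lemma quantile_mono_on_U:
  assumes "u \<in> U" "v \<in> U" "u \<le> v" shows "quantile F u \<le> quantile F v"
proof (rule ccontr)
  assume "\<not> ?thesis"
  then have "F (quantile F u) > v" using quantile_regular[OF assms(2)] by simp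
  then show False using F_quantile[OF assms(1)] assms(3) by simp
qed

lemma prob_X_le: "prob {\<omega> \<in> space M. X i \<omega> \<in> {..x}} = F x" using df by simp

lemma prob_X_greater: "prob {\<omega> \<in> space M. X i \<omega> \<in> {x<..}} = 1 - F x"
proof -
  have "{\<omega> \<in> space M. X i \<omega> \<in> {x<..}} = space M - {\<omega> \<in> space M. X i \<omega> \<le> x}" by auto
  then show ?thesis using df[of i x] by (simp add: prob_compl)
qed

lemma prob_X_interval: "a \<le> b \<Longrightarrow> prob {\<omega> \<in> space M. X i \<omega> \<in> {a<..b}} = F b - F a"
proof -
  assume ab: "a \<le> b"
  have "{\<omega> \<in> space M. X i \<omega> \<in> {a<..b}} = {\<omega> \<in> space M. X i \<omega> \<le> b} - {\<omega> \<in> space M. X i \<omega> \<le> a}" by auto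
  moreover have "{\<omega> \<in> space M. X i \<omega> \<le> a} \<subseteq> {\<omega> \<in> space M. X i \<omega> \<le> b}" using ab by auto
  ultimately show ?thesis using df by (simp add: finite_measure_Diff)
qed

end

section \<open>The grid argument for a single sample size\<close>

lemma min_fraction_le_variance:
  fixes k n :: nat assumes "k \<le> n" "0 < n"
  shows "real (min k (n - k)) / real n / 2 \<le> (real k / real n) * (1 - real k / real n)"
proof -
  have n: "real n > 0" using assms by simp
  have "min (real k) (real n - real k) * real n \<le> 2 * (real k * (real n - real k))"
  proof (cases "real k \<le> real n - real k")
    case True
    then have "real k * real n \<le> real k * (2 * (real n - real k))" by (intro mult_left_mono) auto
    then show ?thesis using True by (simp add: algebra_simps)
  next
    case False
    then have "(real n - real k) * real n \<le> (real n - real k) * (2 * real k)"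
      using assms by (intro mult_left_mono) auto
    then show ?thesis using False by (simp add: algebra_simps)
  qed
  moreover have "real (min k (n - k)) = min (real k) (real n - real k)" using assms by (simp add: of_nat_diff)
  moreover have "(real k / real n) * (1 - real k / real n) = real k * (real n - real k) / (real n * real n)"
    using n by (simp add: field_simps)
  ultimately show ?thesis using n by (simp add: field_simps)
qed

lemma scale_le_variance_powr:
  fixes r n L P \<tau> :: real
  assumes r: "r > 0" and n: "n > 0" and \<tau>: "\<tau> > 0" and L: "L = r * \<tau>^4" and P: "r / n / 2 \<le> P"
  shows "r * \<tau>^3 / n \<le> 2 * (P powr (1/4) * (L / n) powr (3/4))"
proof -
  define z where "z = r / n"
  have z: "z > 0" using r n by (simp add: z_def)
  have "(\<tau>^4) powr (3/4) = (\<tau> powr 4) powr (3/4)" using \<tau> by (simp add: powr_realpow)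
  also have "\<dots> = \<tau> powr 3" by (simp add: powr_powr)
  also have "\<dots> = \<tau>^3" using \<tau> by (simp add: powr_realpow)
  finally have "(\<tau>^4) powr (3/4) = \<tau>^3" .
  moreover have "(L/n) powr (3/4) = z powr (3/4) * (\<tau>^4) powr (3/4)"
  proof -
    have "L/n = z * \<tau>^4" by (simp add: L z_def)
    then show ?thesis using powr_mult[of z "\<tau>^4" "3/4"] z \<tau> by simp
  qed
  ultimately have L_powr: "(L/n) powr (3/4) = z powr (3/4) * \<tau>^3" by simp
  have "(z/2) powr (1/4) \<le> P powr (1/4)" using P z by (intro powr_mono2) (auto simp: z_def)
  moreover have "(z/2) powr (1/4) = z powr (1/4) * (1/2) powr (1/4)"
    using powr_mult[of z "1/2" "1/4"] z by simp
  moreover have "z powr (1/4) * (1/2) \<le> z powr (1/4) * (1/2) powr (1/4)"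
  proof (rule mult_left_mono)
    have "(1/2::real) powr 1 \<le> (1/2) powr (1/4)" by (rule powr_mono') auto
    then show "(1/2::real) \<le> (1/2) powr (1/4)" by simp
  qed simp
  ultimately have P_powr: "z powr (1/4) * (1/2) \<le> P powr (1/4)" by linarith
  have "z powr (1/4) * z powr (3/4) = z" using z by (simp add: powr_add[symmetric])
  then have "r * \<tau>^3 / n = 2 * ((z powr (1/4) * (1/2)) * (z powr (3/4) * \<tau>^3))"
    by (simp add: z_def algebra_simps)
  also have "\<dots> \<le> 2 * (P powr (1/4) * (z powr (3/4) * \<tau>^3))"
    using P_powr \<tau> z by (intro mult_left_mono mult_right_mono) auto
  finally show ?thesis using L_powr by simp
qed

definition bahadur_remainder ::
    "(real \<Rightarrow> real) \<Rightarrow> (real \<Rightarrow> real) \<Rightarrow> (real \<Rightarrow> real) \<Rightarrow> (real \<Rightarrow> real)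
     \<Rightarrow> (nat \<Rightarrow> 'a \<Rightarrow> real) \<Rightarrow> nat \<Rightarrow> real \<Rightarrow> 'a \<Rightarrow> real" where
  "bahadur_remainder F f G g X n p \<omega> =
     G (quantile (emp_df X n \<omega>) p) - G (quantile F p)
     + (emp_df X n \<omega> (quantile F p) - F (quantile F p)) * (g (quantile F p) / f (quantile F p))"

text \<open>A single sample size \<open>n\<close>; \<open>\<rho>\<close> is \<open>r\<close> or \<open>n\<close> in the two parts of the theorem, and
  \<open>\<alpha>\<close>, \<open>\<beta>\<close> are the Chernoff constants for the centre count and for the cell counts.\<close>

locale bahadur_step = iid_sample +
  fixes n :: nat and \<rho> c \<alpha> \<beta> K p r L :: real
  assumes p_def: "p = real (k n) / real n"
    and r_def: "r = real (min (k n) (n - k n))"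
    and L_def: "L = ln \<rho>"
    and k_pos: "1 \<le> k n" and k_less: "k n < n"
    and L_ge_1: "1 \<le> L" and L_le_r: "L \<le> r" and r_le_rho: "r \<le> \<rho>"
    and \<alpha>_pos: "0 < \<alpha>" and \<beta>_pos: "0 < \<beta>"
    and centre_exponent: "c \<le> \<alpha>\<^sup>2 / (4 + 2*\<alpha>)"
    and cell_exponent: "c + 1 \<le> \<beta>\<^sup>2 / (4*(\<alpha>+\<beta>+2) + 2*\<beta>)"
    and window_in_U: "\<And>u. \<bar>u - p\<bar> \<le> (\<alpha>+\<beta>+2) * r * (L/r) powr (1/2) / real n \<Longrightarrow> u \<in> U"
    and Psi_le: "Psi F (\<lambda>x. g x / f x) p (sqrt (r * L / (real n)\<^sup>2)) (\<alpha>+\<beta>+2)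
        \<le> ereal (K * ((L/r) powr (1/4) * (\<bar>g (quantile F p)\<bar> / f (quantile F p))))"
begin

definition "C = \<alpha> + \<beta> + 1"
definition "\<tau> = (L/r) powr (1/4)"
definition "m = \<lceil>C/\<tau>\<rceil>"
definition "\<delta> = r * \<tau>^3 / real n"
definition "\<epsilon> = (C+1) * r * \<tau>^2 / real n"
definition "centre_tol = \<alpha> * r * \<tau>^2"
definition "cell_tol = \<beta> * r * \<tau>^3"
definition "grid j = quantile F (p + of_int j * \<delta>)"
definition "cell j = (if 0 \<le> j then {quantile F p<..grid j} else {grid j<..quantile F p})"
definition "N y \<omega> = (\<Sum>i<n. indicator {..y} (X i \<omega>) :: real)"
definition "cell_count j \<omega> = (\<Sum>i<n. indicator (cell j) (X i \<omega>) :: real)"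
definition "bad =
  {\<omega>\<in>space M. centre_tol \<le> \<bar>N (quantile F p) \<omega> - real (k n)\<bar>}
  \<union> (\<Union>j\<in>{-m..m}. {\<omega>\<in>space M. cell_tol \<le> \<bar>cell_count j \<omega> - real n * (\<bar>real_of_int j\<bar> * \<delta>)\<bar>})"

lemma n_pos: "0 < real n"
  using k_less by simp

lemma r_ge_1: "1 \<le> r"
  using k_pos k_less by (simp add: r_def)

lemma C_pos: "0 < C"
  using \<alpha>_pos \<beta>_pos by (simp add: C_def)

lemma tau_pos: "0 < \<tau>"
  using L_ge_1 r_ge_1 by (simp add: \<tau>_def)

lemma tau_le_1: "\<tau> \<le> 1"
  using L_ge_1 L_le_r r_ge_1 by (simp add: \<tau>_def powr_le1)

lemma ratio_powr_eq: "(L/r) powr (1/2) = \<tau>^2" "L/r = \<tau>^4"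
proof -
  have "\<tau>^j = (L/r) powr (j/4)" for j :: nat
    using tau_pos by (simp add: \<tau>_def powr_powr flip: powr_realpow)
  from this[of 2] this[of 4] L_ge_1 r_ge_1
  show "(L/r) powr (1/2) = \<tau>^2" "L/r = \<tau>^4" by simp_all
qed

lemma r_mult_tau4: "r * \<tau>^4 = L"
  using ratio_powr_eq(2) r_ge_1 by (simp add: field_simps)

lemma grid_index_bounds: "C/\<tau> \<le> m" "m \<le> C/\<tau> + 1" "0 \<le> m"
proof -
  show "C/\<tau> \<le> m" "m \<le> C/\<tau> + 1" unfolding m_def by linarith+
  then show "0 \<le> m" using C_pos tau_pos by (smt (verit) divide_pos_pos of_int_less_0_iff)
qed

lemma tolerances_le_span: "centre_tol + cell_tol \<le> real n * m * \<delta>"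
proof -
  have "centre_tol + cell_tol \<le> (\<alpha>+\<beta>) * r * \<tau>^2"
    using tau_pos tau_le_1 r_ge_1 \<beta>_pos
    by (simp add: centre_tol_def cell_tol_def algebra_simps power_decreasing)
  also have "\<dots> \<le> C * r * \<tau>^2" using r_ge_1 by (intro mult_right_mono) (auto simp: C_def)
  also have "\<dots> = (C/\<tau>) * r * \<tau>^3" using tau_pos by (simp add: power2_eq_square power3_eq_cube)
  also have "\<dots> \<le> m * r * \<tau>^3" using grid_index_bounds r_ge_1 tau_pos by (intro mult_right_mono) auto
  finally show ?thesis using n_pos by (simp add: \<delta>_def)
qed

lemma span_le_window: "real n * m * \<delta> \<le> (C+1) * r * \<tau>^2" "m * \<delta> \<le> \<epsilon>"
proof -
  have "real n * m * \<delta> = m * r * \<tau>^3" using n_pos by (simp add: \<delta>_def)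
  also have "\<dots> \<le> (C/\<tau> + 1) * r * \<tau>^3"
    using grid_index_bounds r_ge_1 tau_pos by (intro mult_right_mono) auto
  also have "\<dots> = C * r * \<tau>^2 + r * \<tau>^3" using tau_pos by (simp add: field_simps power2_eq_square power3_eq_cube)
  also have "\<dots> \<le> C * r * \<tau>^2 + r * \<tau>^2"
    using tau_pos tau_le_1 r_ge_1 by (simp add: power_decreasing)
  finally show span: "real n * m * \<delta> \<le> (C+1) * r * \<tau>^2" by (simp add: algebra_simps)
  then show "m * \<delta> \<le> \<epsilon>" using n_pos by (simp add: \<epsilon>_def field_simps)
qed

lemma window_subset_U: "\<bar>u - p\<bar> \<le> \<epsilon> \<Longrightarrow> u \<in> U"
proof -
  have "(\<alpha>+\<beta>+2) * r * (L/r) powr (1/2) / real n = \<epsilon>"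
    by (simp add: ratio_powr_eq(1) \<epsilon>_def C_def algebra_simps)
  then show "\<bar>u - p\<bar> \<le> \<epsilon> \<Longrightarrow> u \<in> U" using window_in_U[of u] by simp
qed

lemma p_in_U: "p \<in> U"
  using window_subset_U[of p] C_pos r_ge_1 tau_pos n_pos by (simp add: \<epsilon>_def)

lemma delta_pos: "0 < \<delta>"
  using r_ge_1 tau_pos n_pos by (simp add: \<delta>_def)

lemma grid_in_U: "j \<in> {-m..m} \<Longrightarrow> p + j * \<delta> \<in> U"
proof (rule window_subset_U)
  assume "j \<in> {-m..m}"
  with delta_pos have "\<bar>j * \<delta>\<bar> \<le> m * \<delta>" by (auto simp: abs_mult intro!: mult_right_mono)
  then show "\<bar>p + j * \<delta> - p\<bar> \<le> \<epsilon>" using span_le_window(2) by simp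
qed

lemma F_grid: "j \<in> {-m..m} \<Longrightarrow> F (grid j) = p + j * \<delta>"
  using F_quantile[OF grid_in_U] by (simp add: grid_def)

lemma quantile_le_grid: "j \<in> {-m..m} \<Longrightarrow> 0 \<le> j \<Longrightarrow> quantile F p \<le> grid j"
  using quantile_mono_on_U[OF p_in_U grid_in_U] delta_pos by (simp add: grid_def)

lemma grid_le_quantile: "j \<in> {-m..m} \<Longrightarrow> j < 0 \<Longrightarrow> grid j \<le> quantile F p"
  using quantile_mono_on_U[OF grid_in_U p_in_U] delta_pos by (simp add: grid_def mult_nonpos_nonneg)

lemma prob_cell:
  assumes j: "j \<in> {-m..m}" shows "prob {\<omega>\<in>space M. X i \<omega> \<in> cell j} = \<bar>real_of_int j\<bar> * \<delta>"
proof (cases "0 \<le> j")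
  case True
  then show ?thesis
    using prob_X_interval[OF quantile_le_grid[OF j True], of i] F_grid[OF j] F_quantile[OF p_in_U]
    by (simp add: cell_def)
next
  case False
  then show ?thesis
    using prob_X_interval[OF grid_le_quantile[OF j], of i] F_grid[OF j] F_quantile[OF p_in_U]
    by (simp add: cell_def)
qed

lemma cell_borel[measurable]: "cell j \<in> sets borel"
  by (simp add: cell_def)

lemma exp_le_rho_powr: "e * L \<le> a \<Longrightarrow> exp (-a) \<le> \<rho> powr (-e)"
  using r_ge_1 r_le_rho by (simp add: L_def powr_def)

lemma centre_exponent_le: "c * L \<le> centre_tol\<^sup>2 / (4*r + 2*centre_tol)"
proof -
  have "\<tau>^2 \<le> 1" using tau_pos tau_le_1 by (simp add: power_le_one)
  then have "centre_tol \<le> \<alpha> * r" using \<alpha>_pos r_ge_1 by (simp add: centre_tol_def mult_left_le)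
  then have den: "4*r + 2*centre_tol \<le> (4+2*\<alpha>)*r" by (simp add: algebra_simps)
  have "centre_tol\<^sup>2 = \<alpha>\<^sup>2 * r * (r * \<tau>^4)" by (simp add: centre_tol_def eval_nat_numeral)
  then have "centre_tol\<^sup>2 = \<alpha>\<^sup>2 * r * L" by (simp only: r_mult_tau4)
  then have "\<alpha>\<^sup>2 * L / (4+2*\<alpha>) = centre_tol\<^sup>2 / ((4+2*\<alpha>)*r)"
    using r_ge_1 \<alpha>_pos by (simp add: divide_simps)
  also have "\<dots> \<le> centre_tol\<^sup>2 / (4*r + 2*centre_tol)"
    using den \<alpha>_pos r_ge_1 tau_pos
    by (intro divide_left_mono) (auto simp: centre_tol_def intro!: mult_pos_pos add_pos_pos)
  finally have "\<alpha>\<^sup>2 * L / (4+2*\<alpha>) \<le> centre_tol\<^sup>2 / (4*r + 2*centre_tol)" .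
  moreover have "c * L \<le> \<alpha>\<^sup>2 / (4+2*\<alpha>) * L" using centre_exponent L_ge_1 by (intro mult_right_mono) auto
  ultimately show ?thesis by simp
qed

lemma cell_exponent_le: "(c+1) * L \<le> cell_tol\<^sup>2 / (4*((C+1)*r*\<tau>^2) + 2*cell_tol)"
proof -
  have "\<tau>^3 \<le> \<tau>^2" using tau_pos tau_le_1 by (simp add: power_decreasing)
  then have "cell_tol \<le> \<beta> * r * \<tau>^2" using \<beta>_pos r_ge_1 by (simp add: cell_tol_def)
  then have den: "4*((C+1)*r*\<tau>^2) + 2*cell_tol \<le> (4*(C+1)+2*\<beta>)*(r*\<tau>^2)" by (simp add: algebra_simps)
  have "cell_tol\<^sup>2 = \<beta>\<^sup>2 * (r * \<tau>^4) * (r*\<tau>^2)" by (simp add: cell_tol_def eval_nat_numeral)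
  then have "cell_tol\<^sup>2 = \<beta>\<^sup>2 * L * (r*\<tau>^2)" by (simp only: r_mult_tau4)
  then have "\<beta>\<^sup>2 * L / (4*(C+1)+2*\<beta>) = cell_tol\<^sup>2 / ((4*(C+1)+2*\<beta>)*(r*\<tau>^2))"
    using r_ge_1 \<beta>_pos C_pos tau_pos by (simp add: divide_simps)
  also have "\<dots> \<le> cell_tol\<^sup>2 / (4*((C+1)*r*\<tau>^2) + 2*cell_tol)"
    using den \<beta>_pos r_ge_1 tau_pos C_pos
    by (intro divide_left_mono) (auto simp: cell_tol_def intro!: mult_pos_pos add_pos_pos)
  finally have "\<beta>\<^sup>2 * L / (4*(C+1)+2*\<beta>) \<le> cell_tol\<^sup>2 / (4*((C+1)*r*\<tau>^2) + 2*cell_tol)" .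
  moreover have "(c+1) * L \<le> \<beta>\<^sup>2 / (4*(C+1)+2*\<beta>) * L"
    using cell_exponent L_ge_1 by (intro mult_right_mono) (auto simp: C_def add_ac)
  ultimately show ?thesis by simp
qed

lemma prob_centre_deviation:
  "prob {\<omega>\<in>space M. centre_tol \<le> \<bar>N (quantile F p) \<omega> - real (k n)\<bar>} \<le> 2 * \<rho> powr (-c)"
proof -
  have tol: "0 < centre_tol" using \<alpha>_pos r_ge_1 tau_pos by (simp add: centre_tol_def)
  have k_eq: "real (k n) = real n * p" using n_pos by (simp add: p_def)
  have bound: "2 * exp (-(centre_tol\<^sup>2/(4*r + 2*centre_tol))) \<le> 2 * \<rho> powr (-c)"
    using exp_le_rho_powr[OF centre_exponent_le] by simp
  show ?thesis
  proof (cases "k n \<le> n - k n")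
    case True
    have "real n * p \<le> r" using True k_eq by (simp add: r_def)
    then have "prob {\<omega>\<in>space M. centre_tol \<le> \<bar>(\<Sum>i<n. indicator {..quantile F p} (X i \<omega>)) - real n * p\<bar>}
        \<le> 2 * exp (-(centre_tol\<^sup>2/(4*r + 2*centre_tol)))"
      using prob_X_le F_quantile[OF p_in_U] by (intro indicator_sum_deviation[OF indep _ _ tol]) auto
    then show ?thesis using bound k_eq by (simp add: N_def)
  next
    case False
    have "real n * (1 - p) \<le> r" using False k_eq k_less by (simp add: r_def of_nat_diff algebra_simps)
    then have dev: "prob {\<omega>\<in>space M. centre_tol \<le> \<bar>(\<Sum>i<n. indicator {quantile F p<..} (X i \<omega>)) - real n * (1 - p)\<bar>}
        \<le> 2 * exp (-(centre_tol\<^sup>2/(4*r + 2*centre_tol)))"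
      using prob_X_greater F_quantile[OF p_in_U] by (intro indicator_sum_deviation[OF indep _ _ tol]) auto
    have complement: "(\<Sum>i<n. indicator {quantile F p<..} (X i \<omega>)) = real n - N (quantile F p) \<omega>" for \<omega>
    proof -
      have "(\<Sum>i<n. indicator {quantile F p<..} (X i \<omega>) + indicator {..quantile F p} (X i \<omega>) :: real)
          = (\<Sum>i<n. 1)"
        by (rule sum.cong) (auto simp: indicator_def)
      then show ?thesis by (simp add: N_def sum.distrib)
    qed
    have "\<bar>(\<Sum>i<n. indicator {quantile F p<..} (X i \<omega>)) - real n * (1 - p)\<bar>
        = \<bar>N (quantile F p) \<omega> - real (k n)\<bar>" for \<omega>
      unfolding complement k_eq by (simp add: algebra_simps abs_minus_commute)
    then show ?thesis using dev bound by simp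
  qed
qed

lemma prob_cell_deviation:
  assumes j: "j \<in> {-m..m}"
  shows "prob {\<omega>\<in>space M. cell_tol \<le> \<bar>cell_count j \<omega> - real n * (\<bar>real_of_int j\<bar> * \<delta>)\<bar>} \<le> 2 * \<rho> powr (-(c+1))"
proof -
  have tol: "0 < cell_tol" using \<beta>_pos r_ge_1 tau_pos by (simp add: cell_tol_def)
  have "real n * (\<bar>real_of_int j\<bar> * \<delta>) \<le> real n * (m * \<delta>)"
    using j delta_pos n_pos by (intro mult_left_mono mult_right_mono) auto
  then have V: "real n * (\<bar>real_of_int j\<bar> * \<delta>) \<le> (C+1)*r*\<tau>^2" using span_le_window(1) by simp
  have "prob {\<omega>\<in>space M. cell_tol \<le> \<bar>cell_count j \<omega> - real n * (\<bar>real_of_int j\<bar> * \<delta>)\<bar>}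
      \<le> 2 * exp (-(cell_tol\<^sup>2/(4*((C+1)*r*\<tau>^2) + 2*cell_tol)))"
    unfolding cell_count_def
    by (rule indicator_sum_deviation[OF indep cell_borel prob_cell[OF j] tol V])
  also have "\<dots> \<le> 2 * \<rho> powr (-(c+1))" using exp_le_rho_powr[OF cell_exponent_le] by simp
  finally show ?thesis .
qed

lemma bad_event: "bad \<in> events"
proof -
  have "{\<omega>\<in>space M. cell_tol \<le> \<bar>cell_count j \<omega> - real n * (\<bar>real_of_int j\<bar> * \<delta>)\<bar>} \<in> events" for j
    unfolding cell_count_def by measurable
  moreover have "{\<omega>\<in>space M. centre_tol \<le> \<bar>N (quantile F p) \<omega> - real (k n)\<bar>} \<in> events"
    unfolding N_def by measurable
  ultimately show ?thesis unfolding bad_def by auto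
qed

lemma card_grid_le: "real (card {-m..m}) \<le> (2*C+3) * \<rho>"
proof -
  have "real (card {-m..m}) = 2*m + 1" using grid_index_bounds(3) by simp
  also have "\<dots> \<le> 2*(C/\<tau> + 1) + 1" using grid_index_bounds(2) by simp
  also have "\<dots> \<le> (2*C+3)/\<tau>" using tau_pos tau_le_1 C_pos by (simp add: field_simps)
  also have "\<dots> \<le> (2*C+3)/\<tau>^4"
  proof (rule divide_left_mono)
    show "\<tau>^4 \<le> \<tau>" using tau_pos tau_le_1 power_decreasing[of 1 4 \<tau>] by simp
  qed (use C_pos tau_pos in auto)
  also have "\<dots> = (2*C+3) * (r/L)" by (simp add: ratio_powr_eq(2)[symmetric])
  also have "\<dots> \<le> (2*C+3) * \<rho>"
  proof (rule mult_left_mono)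
    have "r/L \<le> r" using L_ge_1 r_ge_1 by (simp add: divide_le_eq mult_le_cancel_left1)
    then show "r/L \<le> \<rho>" using r_le_rho by simp
  qed (use C_pos in simp)
  finally show ?thesis .
qed

lemma prob_bad_le: "prob bad \<le> (2 + 2*(2*C+3)) * \<rho> powr (-c)"
proof -
  have cells: "{\<omega>\<in>space M. cell_tol \<le> \<bar>cell_count j \<omega> - real n * (\<bar>real_of_int j\<bar> * \<delta>)\<bar>} \<in> events" for j
    unfolding cell_count_def by measurable
  have "prob bad \<le> prob {\<omega>\<in>space M. centre_tol \<le> \<bar>N (quantile F p) \<omega> - real (k n)\<bar>}
      + prob (\<Union>j\<in>{-m..m}. {\<omega>\<in>space M. cell_tol \<le> \<bar>cell_count j \<omega> - real n * (\<bar>real_of_int j\<bar> * \<delta>)\<bar>})"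
    unfolding bad_def by (rule measure_Un_le) (use cells in \<open>auto simp: N_def\<close>)
  also have "\<dots> \<le> 2 * \<rho> powr (-c)
      + (\<Sum>j\<in>{-m..m}. prob {\<omega>\<in>space M. cell_tol \<le> \<bar>cell_count j \<omega> - real n * (\<bar>real_of_int j\<bar> * \<delta>)\<bar>})"
    by (intro add_mono prob_centre_deviation finite_measure_subadditive_finite) (use cells in auto)
  also have "\<dots> \<le> 2 * \<rho> powr (-c) + (\<Sum>j\<in>{-m..m}. 2 * \<rho> powr (-(c+1)))"
    by (intro add_left_mono sum_mono prob_cell_deviation)
  also have "\<dots> \<le> 2 * \<rho> powr (-c) + ((2*C+3) * \<rho>) * (2 * \<rho> powr (-(c+1)))"
    using card_grid_le by (simp add: mult_right_mono)
  also have "((2*C+3) * \<rho>) * (2 * \<rho> powr (-(c+1))) = 2*(2*C+3) * \<rho> powr (-c)"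
    using r_ge_1 r_le_rho by (simp add: powr_add[symmetric] powr_diff powr_minus field_simps)
  finally show ?thesis by (simp add: algebra_simps)
qed

lemma N_mono: "mono (\<lambda>y. N y \<omega>)"
  unfolding N_def by (rule monoI, rule sum_mono) (auto simp: indicator_def)

lemma cell_count_eq:
  assumes j: "j \<in> {-m..m}"
  shows "\<bar>cell_count j \<omega> - real n * (\<bar>real_of_int j\<bar> * \<delta>)\<bar>
       = \<bar>N (grid j) \<omega> - N (quantile F p) \<omega> - real n * j * \<delta>\<bar>"
proof -
  have ind_diff: "indicator {a<..b} y = indicator {..b} y - (indicator {..a} y :: real)"
    if "a \<le> b" for a b y :: real
    using that by (auto simp: indicator_def)
  show ?thesis
  proof (cases "0 \<le> j")
    case True
    then have "cell_count j \<omega> = N (grid j) \<omega> - N (quantile F p) \<omega>"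
      using quantile_le_grid[OF j]
      by (simp add: cell_count_def cell_def N_def ind_diff sum_subtractf)
    then show ?thesis using True by simp
  next
    case False
    then have "cell_count j \<omega> = N (quantile F p) \<omega> - N (grid j) \<omega>"
      using grid_le_quantile[OF j]
      by (simp add: cell_count_def cell_def N_def ind_diff sum_subtractf)
    then show ?thesis using False by (simp add: abs_minus_commute algebra_simps)
  qed
qed

lemma sample_quantile_off_bad:
  assumes \<omega>: "\<omega> \<in> space M" "\<omega> \<notin> bad"
  defines "\<xi> \<equiv> quantile (emp_df X n \<omega>) p"
  shows "\<bar>F \<xi> - p\<bar> \<le> \<epsilon>"
    and "\<bar>real n * (F \<xi> - p) + N (quantile F p) \<omega> - real (k n)\<bar> < real n * \<delta> + cell_tol"
proof -
  have centre: "\<bar>N (quantile F p) \<omega> - real (k n)\<bar> < centre_tol"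
    using \<omega> by (auto simp: bad_def)
  have cells: "\<bar>N (grid j) \<omega> - N (quantile F p) \<omega> - real n * j * \<delta>\<bar> < cell_tol" if j: "j \<in> {-m..m}" for j
    using \<omega> j by (auto simp: bad_def not_le simp flip: cell_count_eq[OF j])
  have below_\<xi>: "N y \<omega> < real (k n)" if "y < \<xi>" for y
    using emp_quantile_count_bounds(1)[of "k n" n y X \<omega>] k_pos k_less that
    by (simp add: \<xi>_def N_def p_def)
  have at_\<xi>: "real (k n) \<le> N \<xi> \<omega>"
    using emp_quantile_count_bounds(2)[of "k n" n X \<omega>] k_pos k_less by (simp add: \<xi>_def N_def p_def)
  have above_grid: "F y > F (grid j)" if "j \<in> {-m..m}" "y > grid j" for j y
    using quantile_regular[OF grid_in_U[OF that(1)]] that(2) F_grid[OF that(1)] by (simp add: grid_def)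
  have k_eq: "real (k n) = real n * p" using n_pos by (simp add: p_def)
  note bound = order_statistic_grid_bound[where N="\<lambda>y. N y \<omega>" and x=grid and \<xi>=\<xi>,
      OF mono_F N_mono F_grid above_grid below_\<xi> at_\<xi> cells centre tolerances_le_span
         delta_pos n_pos k_eq grid_index_bounds(3)]
  show "\<bar>F \<xi> - p\<bar> \<le> \<epsilon>" using bound(1,2) span_le_window(2) by (simp add: abs_le_iff)
  show "\<bar>real n * (F \<xi> - p) + N (quantile F p) \<omega> - real (k n)\<bar> < real n * \<delta> + cell_tol"
    using bound(3) .
qed

lemma g_over_f_oscillation:
  assumes w: "\<bar>w - p\<bar> \<le> \<epsilon>"
  shows "\<bar>g (quantile F w) / f (quantile F w) - g (quantile F p) / f (quantile F p)\<bar>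
         \<le> \<bar>K\<bar> * (\<tau> * (\<bar>g (quantile F p)\<bar> / f (quantile F p)))"
proof -
  define s where "s = r*\<tau>^2/real n"
  define t where "t = (w - p) / s"
  have s_pos: "s > 0" using r_ge_1 tau_pos n_pos by (simp add: s_def)
  have "sqrt (r * L / (real n)\<^sup>2) = s"
  proof -
    have "s\<^sup>2 = r * (r * \<tau>^4) / (real n)\<^sup>2"
      by (simp add: s_def power2_eq_square eval_nat_numeral)
    then have "r * L / (real n)\<^sup>2 = s\<^sup>2" by (simp only: r_mult_tau4)
    then show ?thesis using s_pos by simp
  qed
  moreover have "\<bar>w - p\<bar> \<le> (C+1) * s" using w by (simp add: \<epsilon>_def s_def)
  then have "\<bar>t\<bar> \<le> C + 1" using s_pos by (simp add: t_def abs_divide pos_divide_le_eq)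
  moreover have "p + t * s = w" using s_pos by (simp add: t_def)
  ultimately have "\<bar>g (quantile F w) / f (quantile F w) - g (quantile F p) / f (quantile F p)\<bar>
      \<le> K * (\<tau> * (\<bar>g (quantile F p)\<bar> / f (quantile F p)))"
    using Psi_le unfolding Psi_def SUP_le_iff
    by (force simp: \<tau>_def C_def add_ac abs_le_iff)
  also have "\<dots> \<le> \<bar>K\<bar> * (\<tau> * (\<bar>g (quantile F p)\<bar> / f (quantile F p)))"
    using tau_pos F_deriv_quantile[OF p_in_U] by (intro mult_right_mono) auto
  finally show ?thesis .
qed

lemma mean_value_in_window:
  assumes "\<bar>F \<xi> - p\<bar> \<le> \<epsilon>"
  obtains w where "\<bar>w - p\<bar> \<le> \<bar>F \<xi> - p\<bar>"
    and "G \<xi> - G (quantile F p) = (F \<xi> - p) * (g (quantile F w) / f (quantile F w))"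
proof -
  have "\<exists>w. min p (F \<xi>) \<le> w \<and> w \<le> max p (F \<xi>) \<and>
      G \<xi> - G (quantile F p) = (F \<xi> - p) * (g (quantile F w) / f (quantile F w))"
  proof (rule quantile_mean_value[where lo="p - \<epsilon>" and hi="p + \<epsilon>", OF mono_F])
    fix u assume "u \<in> {p - \<epsilon>..p + \<epsilon>}"
    then have u: "u \<in> U" using window_subset_U by (auto simp: abs_le_iff)
    show "F (quantile F u) = u \<and> (\<forall>x<quantile F u. F x < u) \<and> (\<forall>x>quantile F u. F x > u)"
      by (rule quantile_regular[OF u])
    show "DERIV F (quantile F u) :> f (quantile F u) \<and> f (quantile F u) > 0
        \<and> DERIV G (quantile F u) :> g (quantile F u)"
      using F_deriv_quantile[OF u] G_deriv_quantile[OF u] by simp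
  qed (use assms in \<open>auto simp: abs_le_iff\<close>)
  then show ?thesis
    using that by (fastforce simp: abs_le_iff min_def max_def split: if_splits)
qed

lemma cell_width_le_Delta: "r * \<tau>^3 / real n \<le> 2 * ((p * (1 - p)) powr (1/4) * (L / real n) powr (3/4))"
proof (rule scale_le_variance_powr)
  show "r / real n / 2 \<le> p * (1 - p)"
    unfolding r_def p_def by (rule min_fraction_le_variance) (use k_less in auto)
qed (use r_ge_1 n_pos tau_pos r_mult_tau4 in auto)

lemma remainder_off_bad:
  assumes \<omega>: "\<omega> \<in> space M" "\<omega> \<notin> bad"
  shows "\<bar>bahadur_remainder F f G g X n p \<omega>\<bar>
    \<le> 2*(1+\<beta>+\<bar>K\<bar>*(C+1)) * (p * (1 - p)) powr (1/4) * (L / real n) powr (3/4)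
        * (\<bar>g (quantile F p)\<bar> / f (quantile F p))"
proof -
  define q where "q = quantile F"
  define \<xi> where "\<xi> = quantile (emp_df X n \<omega>) p"
  define V where "V = F \<xi>"
  define N0 where "N0 = N (q p) \<omega>"
  define h where "h u = g (q u) / f (q u)" for u
  define hq where "hq = \<bar>g (q p)\<bar> / f (q p)"
  define Z where "Z = r * \<tau>^3 / real n"
  have V_near: "\<bar>V - p\<bar> \<le> \<epsilon>"
    using sample_quantile_off_bad(1)[OF \<omega>] by (simp add: V_def \<xi>_def)
  have V_lin: "\<bar>real n * (V - p) + N0 - real (k n)\<bar> < real n * \<delta> + cell_tol"
    using sample_quantile_off_bad(2)[OF \<omega>] by (simp add: V_def \<xi>_def N0_def q_def)
  have f_pos: "f (q p) > 0" using F_deriv_quantile[OF p_in_U] by (simp add: q_def)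
  have hq_nonneg: "0 \<le> hq" using f_pos by (simp add: hq_def)
  obtain w where w: "\<bar>w - p\<bar> \<le> \<bar>V - p\<bar>" and G_mvt: "G \<xi> - G (q p) = (V - p) * h w"
    using mean_value_in_window[OF V_near[unfolded V_def]] by (auto simp: V_def h_def q_def)
  have h_close: "\<bar>h w - h p\<bar> \<le> \<bar>K\<bar> * (\<tau> * hq)"
    using g_over_f_oscillation[of w] w V_near by (simp add: h_def hq_def q_def)
  have "bahadur_remainder F f G g X n p \<omega>
      = h p * ((real n * (V - p) + N0 - real (k n)) / real n) + (h w - h p) * (V - p)"
  proof -
    have "emp_df X n \<omega> (q p) = N0 / real n"
      by (simp only: emp_df_def card_obs_le_eq_indicator_sum N0_def N_def)
    then have "bahadur_remainder F f G g X n p \<omega> = G \<xi> - G (q p) + (N0 / real n - p) * h p"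
      using F_quantile[OF p_in_U] by (simp add: bahadur_remainder_def \<xi>_def h_def q_def)
    also have "\<dots> = h p * ((real n * (V - p) + N0 - real (k n)) / real n) + (h w - h p) * (V - p)"
      using n_pos unfolding G_mvt by (simp add: p_def field_simps)
    finally show ?thesis .
  qed
  also have "\<bar>\<dots>\<bar> \<le> hq * ((1+\<beta>) * Z) + \<bar>K\<bar> * (C+1) * hq * Z"
  proof (rule order_trans[OF abs_triangle_ineq add_mono])
    have "\<bar>(real n * (V - p) + N0 - real (k n)) / real n\<bar> \<le> (real n * \<delta> + cell_tol) / real n"
      using V_lin n_pos by (simp add: abs_divide divide_right_mono)
    also have "\<dots> = (1+\<beta>) * Z" using n_pos by (simp add: \<delta>_def cell_tol_def Z_def field_simps)
    finally have "hq * \<bar>(real n * (V - p) + N0 - real (k n)) / real n\<bar> \<le> hq * ((1+\<beta>) * Z)"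
      using hq_nonneg by (intro mult_left_mono) auto
    then show "\<bar>h p * ((real n * (V - p) + N0 - real (k n)) / real n)\<bar> \<le> hq * ((1+\<beta>) * Z)"
      using f_pos by (simp only: h_def hq_def abs_mult abs_divide)
    have "\<bar>(h w - h p) * (V - p)\<bar> \<le> (\<bar>K\<bar> * (\<tau> * hq)) * \<epsilon>"
      unfolding abs_mult using h_close V_near by (intro mult_mono) auto
    also have "\<dots> = \<bar>K\<bar> * (C+1) * hq * Z"
      by (simp add: \<epsilon>_def Z_def power2_eq_square power3_eq_cube)
    finally show "\<bar>(h w - h p) * (V - p)\<bar> \<le> \<bar>K\<bar> * (C+1) * hq * Z" .
  qed
  also have "\<dots> = (1+\<beta>+\<bar>K\<bar>*(C+1)) * hq * Z" by (simp add: algebra_simps)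
  also have "\<dots> \<le> (1+\<beta>+\<bar>K\<bar>*(C+1)) * hq * (2 * ((p * (1 - p)) powr (1/4) * (L / real n) powr (3/4)))"
    using cell_width_le_Delta \<beta>_pos C_pos hq_nonneg by (intro mult_left_mono) (auto simp: Z_def)
  finally show ?thesis by (simp only: hq_def q_def mult_ac)
qed

lemma remainder_tail_le:
  "measure M {\<omega> \<in> space M. \<bar>bahadur_remainder F f G g X n p \<omega>\<bar>
      > 2*(1+\<beta>+\<bar>K\<bar>*(C+1)) * (p * (1 - p)) powr (1/4) * (L / real n) powr (3/4)
        * (\<bar>g (quantile F p)\<bar> / f (quantile F p))}
   \<le> (2 + 2*(2*C+3)) * \<rho> powr (-c)"
proof -
  have "measure M {\<omega> \<in> space M. \<bar>bahadur_remainder F f G g X n p \<omega>\<bar>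
      > 2*(1+\<beta>+\<bar>K\<bar>*(C+1)) * (p * (1 - p)) powr (1/4) * (L / real n) powr (3/4)
        * (\<bar>g (quantile F p)\<bar> / f (quantile F p))} \<le> prob bad"
    using remainder_off_bad by (intro finite_measure_mono bad_event) (auto simp: not_le[symmetric])
  then show ?thesis using prob_bad_le by simp
qed

end

section \<open>Asymptotics\<close>

lemma chernoff_constants_exist:
  fixes c :: real assumes c: "0 < c"
  obtains \<alpha> \<beta> where "0 < \<alpha>" "0 < \<beta>" "c \<le> \<alpha>\<^sup>2 / (4 + 2*\<alpha>)"
    "c + 1 \<le> \<beta>\<^sup>2 / (4*(\<alpha>+\<beta>+2) + 2*\<beta>)"
proof
  define \<alpha> where "\<alpha> = 4*c + 4"
  show \<alpha>: "0 < \<alpha>" using c by (simp add: \<alpha>_def)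
  have "c*(4+2*\<alpha>) \<le> \<alpha>*\<alpha>" using c by (simp add: \<alpha>_def algebra_simps)
  then show "c \<le> \<alpha>\<^sup>2 / (4 + 2*\<alpha>)" using \<alpha> by (simp add: le_divide_eq power2_eq_square)
  define a where "a = (c+1)*(4*\<alpha>+8)"
  define b where "b = 6*(c+1)"
  define \<beta> where "\<beta> = a + b + 1"
  have ab: "0 \<le> a" "0 \<le> b" using c \<alpha> by (auto simp: a_def b_def)
  show \<beta>: "0 < \<beta>" using ab by (simp add: \<beta>_def)
  have "(c+1)*(4*(\<alpha>+\<beta>+2) + 2*\<beta>) = a + b*\<beta>" by (simp add: a_def b_def algebra_simps)
  also have "\<dots> \<le> \<beta>*\<beta>"
  proof -
    have "a \<le> \<beta>*(a+1)" using ab \<beta> by (simp add: \<beta>_def algebra_simps)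
    then show ?thesis by (simp add: \<beta>_def algebra_simps)
  qed
  finally show "c + 1 \<le> \<beta>\<^sup>2 / (4*(\<alpha>+\<beta>+2) + 2*\<beta>)"
    using \<alpha> \<beta> by (simp add: le_divide_eq power2_eq_square)
qed

lemma window_in_interval:
  fixes lo hi \<eta> p s e u :: real
  assumes "lo - \<eta>/2 < p" "p < hi + \<eta>/2" "0 < p" "p < 1"
    and "0 < s" "s \<le> p" "s \<le> 1 - p" "0 \<le> e" "e \<le> min (1/2) (\<eta>/2)"
    and "\<bar>u - p\<bar> \<le> e * s"
  shows "0 < u" "u < 1" "lo - \<eta> \<le> u" "u \<le> hi + \<eta>"
proof -
  have "e * s \<le> (1/2) * s" "e * s \<le> \<eta>/2 * 1"
    using assms by (intro mult_mono; simp)+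
  moreover have "u - p \<le> e * s" "p - u \<le> e * s" using assms(10) by (simp_all add: abs_le_iff)
  ultimately show "0 < u" "u < 1" "lo - \<eta> \<le> u" "u \<le> hi + \<eta>"
    using assms(1-7) by linarith+
qed

context iid_sample begin

lemma eventually_bahadur_step:
  fixes \<rho> :: "nat \<Rightarrow> real"
  assumes r_inf: "filterlim (\<lambda>n. min (k n) (n - k n)) at_top sequentially"
    and rho_ge: "eventually (\<lambda>n. real (min (k n) (n - k n)) \<le> \<rho> n) sequentially"
    and ln_rho_small: "(\<lambda>n. ln (\<rho> n) / real (min (k n) (n - k n))) \<longlonglongrightarrow> 0"
    and \<alpha>: "0 < \<alpha>" and \<beta>: "0 < \<beta>" and exps: "c \<le> \<alpha>\<^sup>2 / (4 + 2*\<alpha>)"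
      "c + 1 \<le> \<beta>\<^sup>2 / (4*(\<alpha>+\<beta>+2) + 2*\<beta>)"
    and Psi_bound: "\<forall>\<^sub>F n in sequentially.
        Psi F (\<lambda>x. g x / f x) (real (k n) / real n)
            (sqrt (real (min (k n) (n - k n)) * ln (\<rho> n) / (real n)\<^sup>2)) (\<alpha>+\<beta>+2)
        \<le> ereal (K * ((ln (\<rho> n) / real (min (k n) (n - k n))) powr (1/4)
               * (\<bar>g (quantile F (real (k n) / real n))\<bar> / f (quantile F (real (k n) / real n)))))"
  shows "eventually (\<lambda>n. bahadur_step M X F f G g U k n (\<rho> n) c \<alpha> \<beta> K
      (real (k n) / real n) (real (min (k n) (n - k n))) (ln (\<rho> n))) sequentially"
proof -
  define W where "W = \<alpha> + \<beta> + 2"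
  have W: "0 < W" using \<alpha> \<beta> by (simp add: W_def)
  have p01: "0 \<le> real (k n) / real n \<and> real (k n) / real n \<le> 1" for n
    using k_le[of n] by (cases "n = 0") (auto simp: divide_le_eq)
  obtain lo hi \<eta> where \<eta>: "\<eta> > 0"
    and interval_U: "\<forall>u. 0 < u \<and> u < 1 \<and> lo - \<eta> \<le> u \<and> u \<le> hi + \<eta> \<longrightarrow> u \<in> U"
    and p_interval: "eventually (\<lambda>n. lo - \<eta>/2 < real (k n) / real n \<and> real (k n) / real n < hi + \<eta>/2) sequentially"
    using cond_A1_neighbourhood[OF A1 p01] by blast
  define \<theta> where "\<theta> = min 1 ((min (1/2) (\<eta>/2) / W)\<^sup>2)"
  have \<theta>: "\<theta> > 0" using \<eta> W by (simp add: \<theta>_def)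
  have r_large: "eventually (\<lambda>n. exp 1 \<le> real (min (k n) (n - k n))) sequentially"
    using filterlim_compose[OF filterlim_real_sequentially r_inf] by (simp add: filterlim_at_top)
  have ratio_small: "eventually (\<lambda>n. ln (\<rho> n) / real (min (k n) (n - k n)) < \<theta>) sequentially"
    using order_tendstoD(2)[OF ln_rho_small \<theta>] .
  show ?thesis
    using r_large ratio_small rho_ge p_interval Psi_bound
  proof eventually_elim
    case (elim n)
    define r where "r = real (min (k n) (n - k n))"
    define L where "L = ln (\<rho> n)"
    define p where "p = real (k n) / real n"
    have r_e: "exp 1 \<le> r" using elim(1) by (simp add: r_def)
    then have "1 \<le> r" by (smt (verit) one_le_exp_iff)
    then have k: "1 \<le> k n" "k n < n" unfolding r_def by linarith+
    have rho: "r \<le> \<rho> n" using elim(3) by (simp add: r_def)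
    have L_ge_1: "1 \<le> L" unfolding L_def using r_e rho
      by (metis exp_gt_zero ln_exp ln_le_cancel_iff order.strict_trans2 order_trans)
    have ratio: "L / r < \<theta>" using elim(2) by (simp add: L_def r_def)
    have r_pos: "0 < r" using \<open>1 \<le> r\<close> by simp
    have window: "W * (L/r) powr (1/2) \<le> min (1/2) (\<eta>/2)"
    proof -
      have "L/r \<le> (min (1/2) (\<eta>/2) / W)\<^sup>2" using ratio by (simp add: \<theta>_def)
      then have "sqrt (L/r) \<le> min (1/2) (\<eta>/2) / W"
        using \<eta> W by (simp add: real_le_lsqrt real_sqrt_le_iff)
      then show ?thesis using W L_ge_1 r_pos by (simp add: powr_half_sqrt field_simps)
    qed
    have r_le: "r / real n \<le> p" "r / real n \<le> 1 - p"
      using k by (auto simp: r_def p_def divide_right_mono of_nat_diff field_simps)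
    show ?case
    proof (unfold_locales, fold r_def L_def p_def)
      show "L \<le> r" using ratio r_pos by (simp add: \<theta>_def divide_less_eq)
      show "u \<in> U" if "\<bar>u - p\<bar> \<le> (\<alpha>+\<beta>+2) * r * (L/r) powr (1/2) / real n" for u
      proof -
        have "\<bar>u - p\<bar> \<le> (W * (L/r) powr (1/2)) * (r / real n)"
          using that by (simp add: W_def ac_simps)
        then show ?thesis
          using window_in_interval[of lo \<eta> p hi "r / real n" "W * (L/r) powr (1/2)" u]
            interval_U elim(4) k r_le r_pos window W
          by (auto simp: p_def)
      qed
      show "Psi F (\<lambda>x. g x / f x) p (sqrt (r * L / (real n)\<^sup>2)) (\<alpha>+\<beta>+2)
        \<le> ereal (K * ((L/r) powr (1/4) * (\<bar>g (quantile F p)\<bar> / f (quantile F p))))"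
        using elim(5) by (simp add: r_def L_def p_def)
    qed (use k rho L_ge_1 \<alpha> \<beta> exps indep df k_le A1 G_deriv in \<open>simp_all add: r_def L_def p_def\<close>)
  qed
qed

lemma remainder_tail_bound:
  fixes \<rho> :: "nat \<Rightarrow> real"
  assumes r_inf: "filterlim (\<lambda>n. min (k n) (n - k n)) at_top sequentially"
    and rho_ge: "eventually (\<lambda>n. real (min (k n) (n - k n)) \<le> \<rho> n) sequentially"
    and ln_rho_small: "(\<lambda>n. ln (\<rho> n) / real (min (k n) (n - k n))) \<longlonglongrightarrow> 0"
    and Psi_cond: "\<And>C. C > 0 \<Longrightarrow> \<exists>K. \<forall>\<^sub>F n in sequentially.
        Psi F (\<lambda>x. g x / f x) (real (k n) / real n)
            (sqrt (real (min (k n) (n - k n)) * ln (\<rho> n) / (real n)\<^sup>2)) C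
        \<le> ereal (K * ((ln (\<rho> n) / real (min (k n) (n - k n))) powr (1/4)
               * (\<bar>g (quantile F (real (k n) / real n))\<bar> / f (quantile F (real (k n) / real n)))))"
    and c: "0 < c"
  shows "\<exists>A>0. (\<lambda>n. measure M {\<omega> \<in> space M.
            \<bar>bahadur_remainder F f G g X n (real (k n) / real n) \<omega>\<bar>
            > A * ((real (k n) / real n) * (1 - real (k n) / real n)) powr (1/4)
                * (ln (\<rho> n) / real n) powr (3/4)
                * (\<bar>g (quantile F (real (k n) / real n))\<bar> / f (quantile F (real (k n) / real n)))})
        \<in> O(\<lambda>n. \<rho> n powr (-c))"
proof -
  obtain \<alpha> \<beta> where \<alpha>: "0 < \<alpha>" and \<beta>: "0 < \<beta>" and exps: "c \<le> \<alpha>\<^sup>2 / (4 + 2*\<alpha>)"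
      "c + 1 \<le> \<beta>\<^sup>2 / (4*(\<alpha>+\<beta>+2) + 2*\<beta>)"
    using chernoff_constants_exist[OF c] by blast
  obtain K where K: "\<forall>\<^sub>F n in sequentially.
        Psi F (\<lambda>x. g x / f x) (real (k n) / real n)
            (sqrt (real (min (k n) (n - k n)) * ln (\<rho> n) / (real n)\<^sup>2)) (\<alpha>+\<beta>+2)
        \<le> ereal (K * ((ln (\<rho> n) / real (min (k n) (n - k n))) powr (1/4)
               * (\<bar>g (quantile F (real (k n) / real n))\<bar> / f (quantile F (real (k n) / real n)))))"
    using Psi_cond[of "\<alpha>+\<beta>+2"] \<alpha> \<beta> by auto
  define A where "A = 2*(1+\<beta>+\<bar>K\<bar>*(\<alpha>+\<beta>+2))"
  have A: "0 < A" using \<alpha> \<beta> by (simp add: A_def add_pos_nonneg)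
  have "eventually (\<lambda>n. measure M {\<omega> \<in> space M.
            \<bar>bahadur_remainder F f G g X n (real (k n) / real n) \<omega>\<bar>
            > A * ((real (k n) / real n) * (1 - real (k n) / real n)) powr (1/4)
                * (ln (\<rho> n) / real n) powr (3/4)
                * (\<bar>g (quantile F (real (k n) / real n))\<bar> / f (quantile F (real (k n) / real n)))}
          \<le> (2 + 2*(2*(\<alpha>+\<beta>+1)+3)) * \<rho> n powr (-c)) sequentially"
    using eventually_bahadur_step[OF r_inf rho_ge ln_rho_small \<alpha> \<beta> exps K]
    by (rule eventually_mono)
      (frule bahadur_step.remainder_tail_le, drule bahadur_step.C_def, simp add: A_def add_ac)
  then show ?thesis
    using A by (intro exI[of _ A] conjI bigoI[where c="2 + 2*(2*(\<alpha>+\<beta>+1)+3)"])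
      (auto elim!: eventually_mono)
qed

end

theorem theorem3:
  fixes M :: "'a measure" and X :: "nat \<Rightarrow> 'a \<Rightarrow> real"
    and F f G g :: "real \<Rightarrow> real" and U :: "real set" and k :: "nat \<Rightarrow> nat"
  assumes prob: "prob_space M"
    and indep: "prob_space.indep_vars M (\<lambda>_. borel) X UNIV"
    and df: "\<And>i x. measure M {\<omega> \<in> space M. X i \<omega> \<le> x} = F x"
    and k_le: "\<And>n. k n \<le> n"
    and r_inf: "filterlim (\<lambda>n. min (k n) (n - k n)) at_top sequentially"
    and A1: "cond_A1 F f U (\<lambda>n. real (k n) / real n)"
    and G_deriv: "\<forall>x \<in> quantile F ` U. (G has_real_derivative g x) (at x)"
    and cond_i: "\<And>C. C > 0 \<Longrightarrow> \<exists>K. \<forall>\<^sub>F n in sequentially.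
        Psi F (\<lambda>x. g x / f x) (real (k n) / real n)
            (sqrt (real (min (k n) (n - k n)) * ln (real (min (k n) (n - k n))) / (real n)\<^sup>2)) C
        \<le> ereal (K * ((ln (real (min (k n) (n - k n))) / real (min (k n) (n - k n))) powr (1/4)
               * (\<bar>g (quantile F (real (k n) / real n))\<bar> / f (quantile F (real (k n) / real n)))))"
  shows
    "(\<forall>c>0. \<exists>A>0.
        (\<lambda>n. measure M {\<omega> \<in> space M.
            \<bar>G (quantile (emp_df X n \<omega>) (real (k n) / real n)) - G (quantile F (real (k n) / real n))
             + (emp_df X n \<omega> (quantile F (real (k n) / real n)) - F (quantile F (real (k n) / real n)))
               * (g (quantile F (real (k n) / real n)) / f (quantile F (real (k n) / real n)))\<bar>
            > A * ((real (k n) / real n) * (1 - real (k n) / real n)) powr (1/4)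
                * (ln (real (min (k n) (n - k n))) / real n) powr (3/4)
                * (\<bar>g (quantile F (real (k n) / real n))\<bar> / f (quantile F (real (k n) / real n)))})
        \<in> O(\<lambda>n. real (min (k n) (n - k n)) powr (-c)))
     \<and>
     ((((\<lambda>n. ln (real n) / real (min (k n) (n - k n))) \<longlonglongrightarrow> 0) \<and>
       (\<forall>C>0. \<exists>K. \<forall>\<^sub>F n in sequentially.
        Psi F (\<lambda>x. g x / f x) (real (k n) / real n)
            (sqrt (real (min (k n) (n - k n)) * ln (real n) / (real n)\<^sup>2)) C
        \<le> ereal (K * ((ln (real n) / real (min (k n) (n - k n))) powr (1/4)
               * (\<bar>g (quantile F (real (k n) / real n))\<bar> / f (quantile F (real (k n) / real n))))))) \<longrightarrow>
      (\<forall>c>0. \<exists>A>0.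
        (\<lambda>n. measure M {\<omega> \<in> space M.
            \<bar>G (quantile (emp_df X n \<omega>) (real (k n) / real n)) - G (quantile F (real (k n) / real n))
             + (emp_df X n \<omega> (quantile F (real (k n) / real n)) - F (quantile F (real (k n) / real n)))
               * (g (quantile F (real (k n) / real n)) / f (quantile F (real (k n) / real n)))\<bar>
            > A * ((real (k n) / real n) * (1 - real (k n) / real n)) powr (1/4)
                * (ln (real n) / real n) powr (3/4)
                * (\<bar>g (quantile F (real (k n) / real n))\<bar> / f (quantile F (real (k n) / real n)))})
        \<in> O(\<lambda>n. real n powr (-c))))"
proof -
  interpret iid_sample M X F f G g U k
    using prob indep df k_le A1 G_deriv by (simp add: iid_sample_def iid_sample_axioms_def)
  have r: "\<forall>\<^sub>F n in sequentially. real (min (k n) (n - k n)) \<le> real (min (k n) (n - k n))"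
    by simp
  have r_le_n: "\<forall>\<^sub>F n in sequentially. real (min (k n) (n - k n)) \<le> real n"
    by (simp add: min_le_iff_disj)
  have ln_r_over_r: "(\<lambda>n. ln (real (min (k n) (n - k n))) / real (min (k n) (n - k n))) \<longlonglongrightarrow> 0"
    using filterlim_compose[OF ln_x_over_x_tendsto_0 filterlim_compose[OF filterlim_real_sequentially r_inf]]
    by simp
  show ?thesis
    unfolding bahadur_remainder_def[symmetric]
    using remainder_tail_bound[where \<rho>="\<lambda>n. real (min (k n) (n - k n))", OF r_inf r ln_r_over_r cond_i]
      remainder_tail_bound[where \<rho>="\<lambda>n. real n", OF r_inf r_le_n]
    by blast
qed

end
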